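(* The operators $A$ and $B$ have transposes $A^*,B^*$ with respect to $\langle\cdot,\cdot\rangle$, and $A^*B^*A^*=BAB$.
   Context: Let $\mathcal C$ be a strict monoidal category with tensor product $\boxtimes$ and unit object $\mathbb I$ which is an Ab-category (all Hom-sets are abelian groups, composition and $\boxtimes$ are biadditive) whose ground ring $\mathsf k=\operatorname{End}(\mathbb I)$ is a field; each $\operatorname{Hom}(V,W)$ is a $\mathsf k$-vector space via $kf=k\boxtimes f$, and $\boxtimes$ is $\mathsf k$-bilinear on morphisms. An object $V$ is simple if $\operatorname{End}(V)=\mathsf k\,\mathrm{Id}_V$; for such $V$ and $f\in\operatorname{End}(V)$, $\langle f\rangle\in\mathsf k$ denotes the scalar with $f=\langle f\rangle\mathrm{Id}_V$. For objects $V_i$ write $H^{ij}_k=\operatorname{Hom}(V_k,V_i\boxtimes V_j)$ and $H^k_{ij}=\operatorname{Hom}(V_i\boxtimes V_j,V_k)$. A $\Psi$-system in $\mathcal C$ consists of (1) a family of simple objects $\{V_i\}_{i\in I}$ with $\operatorname{Hom}(V_i,V_j)=0$ for $i\neq j$; (2) an involution $i\mapsto i^*$ of $I$; (3) morphisms $b_i:\mathbb I\to V_i\boxtimes V_{i^*}$, $d_i:V_i\boxtimes V_{i^*}\to\mathbb I$ ($i\in I$) with $(\mathrm{Id}_{V_i}\boxtimes d_{i^*})(b_i\boxtimes\mathrm{Id}_{V_i})=\mathrm{Id}_{V_i}$ and $(d_i\boxtimes\mathrm{Id}_{V_i})(\mathrm{Id}_{V_i}\boxtimes b_{i^*})=\mathrm{Id}_{V_i}$;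 (4) for all $i,j\in I$ such that $H^{ij}_k\neq0$ for some $k\in I$, the morphism $\mathrm{Id}_{V_i\boxtimes V_j}$ lies in the image of the linear map $\bigoplus_{k\in I}H^{ij}_k\otimes_{\mathsf k}H^k_{ij}\to\operatorname{End}(V_i\boxtimes V_j)$, $x\otimes y\mapsto x\circ y$. Fix a $\Psi$-system in $\mathcal C$. Let $\hat H=\bigoplus_{i,j,k\in I}H^k_{ij}$, $\check H=\bigoplus_{i,j,k\in I}H^{ij}_k$, $H=\hat H\oplus\check H$, and let $\pi^k_{ij}:H\to H^k_{ij}$, $\pi^{ij}_k:H\to H^{ij}_k$ be the projections. Define $A,B\in\operatorname{End}_{\mathsf k}(H)$ by $Ax=\sum_{i,j,k\in I}\big((\mathrm{Id}_{V_{i^*}}\boxtimes\pi^k_{ij}x)(b_{i^*}\boxtimes\mathrm{Id}_{V_j})+(d_{i^*}\boxtimes\mathrm{Id}_{V_j})(\mathrm{Id}_{V_{i^*}}\boxtimes\pi^{ij}_kx)\big)$, $Bx=\sum_{i,j,k\in I}\big((\pi^k_{ij}x\boxtimes\mathrm{Id}_{V_{j^*}})(\mathrm{Id}_{V_i}\boxtimes b_j)+(\mathrm{Id}_{V_i}\boxtimes d_j)(\pi^{ij}_kx\boxtimes\mathrm{Id}_{V_{j^*}})\big)$. Define the symmetric bilinear form on $H$: $\langle x,y\rangle=\sum_{i,j,k\in I}\big(\langle\pi^k_{ij}x\circ\pi^{ij}_ky\rangle+\langle\pi^k_{ij}y\circ\pi^{ij}_kx\rangle\big)$. A transpose of $f\in\operatorname{End}(H)$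 is an $f^*\in\operatorname{End}(H)$ with $\langle fx,y\rangle=\langle x,f^*y\rangle$ for all $x,y\in H$; it is unique when it exists. *)

theory Defs
  imports Main "HOL-Library.Function_Algebras" "HOL-Library.Product_Plus"
begin

text \<open>Data of a strict monoidal category whose morphisms are elements of an
  abelian group type; the hom-sets are subgroups. Composition of g after f is
  cmp g f; tno/tnm are the tensor product on objects/morphisms; unit is the unit object.\<close>

record ('o, 'm) mcat =
  hom  :: "'o \<Rightarrow> 'o \<Rightarrow> 'm set"
  cmp  :: "'m \<Rightarrow> 'm \<Rightarrow> 'm"
  idm  :: "'o \<Rightarrow> 'm"
  tno  :: "'o \<Rightarrow> 'o \<Rightarrow> 'o"
  tnm  :: "'m \<Rightarrow> 'm \<Rightarrow> 'm"
  unit :: "'o"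

abbreviation ground :: "('o, 'm) mcat \<Rightarrow> 'm set" where
  "ground C \<equiv> hom C (unit C) (unit C)"

definition smab_cat :: "('o, 'm::ab_group_add) mcat \<Rightarrow> bool" where
  "smab_cat C \<longleftrightarrow>
    \<comment> \<open>Ab-category: hom-sets are abelian groups\<close>
    (\<forall>U V. 0 \<in> hom C U V \<and> (\<forall>f\<in>hom C U V. \<forall>g\<in>hom C U V. f + g \<in> hom C U V)
           \<and> (\<forall>f\<in>hom C U V. - f \<in> hom C U V))
    \<comment> \<open>category axioms\<close>
  \<and> (\<forall>U V W f g. f \<in> hom C U V \<longrightarrow> g \<in> hom C V W \<longrightarrow> cmp C g f \<in> hom C U W)
  \<and> (\<forall>U. idm C U \<in> hom C U U)
  \<and> (\<forall>U V f. f \<in> hom C U V \<longrightarrow> cmp C (idm C V) f = f \<and> cmp C f (idm C U) = f)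
  \<and> (\<forall>U V W X f g h. f \<in> hom C U V \<longrightarrow> g \<in> hom C V W \<longrightarrow> h \<in> hom C W X \<longrightarrow>
        cmp C h (cmp C g f) = cmp C (cmp C h g) f)
    \<comment> \<open>composition is biadditive\<close>
  \<and> (\<forall>U V W f f' g. f \<in> hom C U V \<longrightarrow> f' \<in> hom C U V \<longrightarrow> g \<in> hom C V W \<longrightarrow>
        cmp C g (f + f') = cmp C g f + cmp C g f')
  \<and> (\<forall>U V W f g g'. f \<in> hom C U V \<longrightarrow> g \<in> hom C V W \<longrightarrow> g' \<in> hom C V W \<longrightarrow>
        cmp C (g + g') f = cmp C g f + cmp C g' f)
    \<comment> \<open>strict monoidal structure\<close>
  \<and> (\<forall>U V U' V' f g. f \<in> hom C U V \<longrightarrow> g \<in> hom C U' V' \<longrightarrow>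
        tnm C f g \<in> hom C (tno C U U') (tno C V V'))
  \<and> (\<forall>U V W. tno C (tno C U V) W = tno C U (tno C V W))
  \<and> (\<forall>U V U' V' U'' V'' f g h. f \<in> hom C U V \<longrightarrow> g \<in> hom C U' V' \<longrightarrow> h \<in> hom C U'' V'' \<longrightarrow>
        tnm C (tnm C f g) h = tnm C f (tnm C g h))
  \<and> (\<forall>U. tno C (unit C) U = U \<and> tno C U (unit C) = U)
  \<and> (\<forall>U V f. f \<in> hom C U V \<longrightarrow> tnm C (idm C (unit C)) f = f \<and> tnm C f (idm C (unit C)) = f)
  \<and> (\<forall>U V. tnm C (idm C U) (idm C V) = idm C (tno C U V))
  \<and> (\<forall>U V W U' V' W' f g f' g'. f \<in> hom C U V \<longrightarrow> g \<in> hom C V W \<longrightarrow>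
        f' \<in> hom C U' V' \<longrightarrow> g' \<in> hom C V' W' \<longrightarrow>
        cmp C (tnm C g g') (tnm C f f') = tnm C (cmp C g f) (cmp C g' f'))
    \<comment> \<open>tensor product is biadditive\<close>
  \<and> (\<forall>U V U' V' f f' g. f \<in> hom C U V \<longrightarrow> f' \<in> hom C U V \<longrightarrow> g \<in> hom C U' V' \<longrightarrow>
        tnm C (f + f') g = tnm C f g + tnm C f' g \<and> tnm C g (f + f') = tnm C g f + tnm C g f')
    \<comment> \<open>the ground ring End(I) is a field\<close>
  \<and> idm C (unit C) \<noteq> 0
  \<and> (\<forall>a\<in>ground C. \<forall>c\<in>ground C. cmp C a c = cmp C c a)
  \<and> (\<forall>a\<in>ground C. a \<noteq> 0 \<longrightarrow> (\<exists>c\<in>ground C. cmp C c a = idm C (unit C)))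
    \<comment> \<open>the tensor product is k-bilinear, where k f = k \<boxtimes> f\<close>
  \<and> (\<forall>c\<in>ground C. \<forall>U V U' V' f g. f \<in> hom C U V \<longrightarrow> g \<in> hom C U' V' \<longrightarrow>
        tnm C (tnm C c f) g = tnm C c (tnm C f g) \<and> tnm C f (tnm C c g) = tnm C c (tnm C f g))"

definition simple_obj :: "('o, 'm::ab_group_add) mcat \<Rightarrow> 'o \<Rightarrow> bool" where
  "simple_obj C X \<longleftrightarrow> idm C X \<noteq> 0 \<and>
     hom C X X = {tnm C c (idm C X) | c. c \<in> ground C}"

definition scal :: "('o, 'm::ab_group_add) mcat \<Rightarrow> 'o \<Rightarrow> 'm \<Rightarrow> 'm" where
  "scal C X f = (THE c. c \<in> ground C \<and> f = tnm C c (idm C X))"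

definition psi_system :: "('o, 'm::ab_group_add) mcat \<Rightarrow> ('i \<Rightarrow> 'o) \<Rightarrow> ('i \<Rightarrow> 'i)
    \<Rightarrow> ('i \<Rightarrow> 'm) \<Rightarrow> ('i \<Rightarrow> 'm) \<Rightarrow> bool" where
  "psi_system C V st bb dd \<longleftrightarrow>
     (\<forall>i. simple_obj C (V i))
   \<and> (\<forall>i j. i \<noteq> j \<longrightarrow> hom C (V i) (V j) = {0})
   \<and> (\<forall>i. st (st i) = i)
   \<and> (\<forall>i. bb i \<in> hom C (unit C) (tno C (V i) (V (st i)))
          \<and> dd i \<in> hom C (tno C (V i) (V (st i))) (unit C))
   \<and> (\<forall>i. cmp C (tnm C (idm C (V i)) (dd (st i))) (tnm C (bb i) (idm C (V i))) = idm C (V i)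
          \<and> cmp C (tnm C (dd i) (idm C (V i))) (tnm C (idm C (V i)) (bb (st i))) = idm C (V i))
   \<and> (\<forall>i j. (\<exists>k. hom C (V k) (tno C (V i) (V j)) \<noteq> {0}) \<longrightarrow>
        (\<exists>ts :: ('i \<times> 'm \<times> 'm) list.
           (\<forall>(k, x, y) \<in> set ts. x \<in> hom C (V k) (tno C (V i) (V j))
                              \<and> y \<in> hom C (tno C (V i) (V j)) (V k))
         \<and> sum_list (map (\<lambda>(k, x, y). cmp C x y) ts) = idm C (tno C (V i) (V j))))"

text \<open>An element of H is a pair (hat part, check part) of finitely supported families:
  the hat part at (i,j,k) lies in Hom(V_i \<boxtimes> V_j, V_k), the check part at (i,j,k) in
  Hom(V_k, V_i \<boxtimes> V_j).\<close>
type_synonym ('i, 'm) hsp = "(('i \<times> 'i \<times> 'i) \<Rightarrow> 'm) \<times> (('i \<times> 'i \<times> 'i) \<Rightarrow> 'm)"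

definition Hspace :: "('o, 'm::ab_group_add) mcat \<Rightarrow> ('i \<Rightarrow> 'o) \<Rightarrow> ('i, 'm) hsp set" where
  "Hspace C V = {x. (\<forall>i j k. fst x (i, j, k) \<in> hom C (tno C (V i) (V j)) (V k)
                          \<and> snd x (i, j, k) \<in> hom C (V k) (tno C (V i) (V j)))
                  \<and> finite {t. fst x t \<noteq> 0} \<and> finite {t. snd x t \<noteq> 0}}"

definition inj_hat :: "'i \<times> 'i \<times> 'i \<Rightarrow> 'm::ab_group_add \<Rightarrow> ('i, 'm) hsp" where
  "inj_hat t f = ((\<lambda>s. if s = t then f else 0), (\<lambda>s. 0))"

definition inj_chk :: "'i \<times> 'i \<times> 'i \<Rightarrow> 'm::ab_group_add \<Rightarrow> ('i, 'm) hsp" where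
  "inj_chk t f = ((\<lambda>s. 0), (\<lambda>s. if s = t then f else 0))"

text \<open>The operators A and B (sums over i,j,k; terms with vanishing projection are zero
  and are omitted).\<close>
definition opA :: "('o, 'm::ab_group_add) mcat \<Rightarrow> ('i \<Rightarrow> 'o) \<Rightarrow> ('i \<Rightarrow> 'i)
    \<Rightarrow> ('i \<Rightarrow> 'm) \<Rightarrow> ('i \<Rightarrow> 'm) \<Rightarrow> ('i, 'm) hsp \<Rightarrow> ('i, 'm) hsp" where
  "opA C V st bb dd x =
     (\<Sum>(i, j, k) \<in> {t. fst x t \<noteq> 0}.
        inj_chk (st i, k, j)
          (cmp C (tnm C (idm C (V (st i))) (fst x (i, j, k))) (tnm C (bb (st i)) (idm C (V j)))))
   + (\<Sum>(i, j, k) \<in> {t. snd x t \<noteq> 0}.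
        inj_hat (st i, k, j)
          (cmp C (tnm C (dd (st i)) (idm C (V j))) (tnm C (idm C (V (st i))) (snd x (i, j, k)))))"

definition opB :: "('o, 'm::ab_group_add) mcat \<Rightarrow> ('i \<Rightarrow> 'o) \<Rightarrow> ('i \<Rightarrow> 'i)
    \<Rightarrow> ('i \<Rightarrow> 'm) \<Rightarrow> ('i \<Rightarrow> 'm) \<Rightarrow> ('i, 'm) hsp \<Rightarrow> ('i, 'm) hsp" where
  "opB C V st bb dd x =
     (\<Sum>(i, j, k) \<in> {t. fst x t \<noteq> 0}.
        inj_chk (k, st j, i)
          (cmp C (tnm C (fst x (i, j, k)) (idm C (V (st j)))) (tnm C (idm C (V i)) (bb j))))
   + (\<Sum>(i, j, k) \<in> {t. snd x t \<noteq> 0}.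
        inj_hat (k, st j, i)
          (cmp C (tnm C (idm C (V i)) (dd j)) (tnm C (snd x (i, j, k)) (idm C (V (st j))))))"

definition pform :: "('o, 'm::ab_group_add) mcat \<Rightarrow> ('i \<Rightarrow> 'o)
    \<Rightarrow> ('i, 'm) hsp \<Rightarrow> ('i, 'm) hsp \<Rightarrow> 'm" where
  "pform C V x y =
     (\<Sum>(i, j, k) \<in> {t. fst x t \<noteq> 0 \<or> snd x t \<noteq> 0 \<or> fst y t \<noteq> 0 \<or> snd y t \<noteq> 0}.
        scal C (V k) (cmp C (fst x (i, j, k)) (snd y (i, j, k)))
      + scal C (V k) (cmp C (fst y (i, j, k)) (snd x (i, j, k))))"

definition hsmul :: "('o, 'm::ab_group_add) mcat \<Rightarrow> 'm \<Rightarrow> ('i, 'm) hsp \<Rightarrow> ('i, 'm) hsp" where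
  "hsmul C c x = ((\<lambda>t. tnm C c (fst x t)), (\<lambda>t. tnm C c (snd x t)))"

definition hlinear :: "('o, 'm::ab_group_add) mcat \<Rightarrow> ('i \<Rightarrow> 'o)
    \<Rightarrow> (('i, 'm) hsp \<Rightarrow> ('i, 'm) hsp) \<Rightarrow> bool" where
  "hlinear C V f \<longleftrightarrow>
     (\<forall>x\<in>Hspace C V. f x \<in> Hspace C V)
   \<and> (\<forall>x\<in>Hspace C V. \<forall>y\<in>Hspace C V. f (x + y) = f x + f y)
   \<and> (\<forall>c\<in>ground C. \<forall>x\<in>Hspace C V. f (hsmul C c x) = hsmul C c (f x))"

definition is_transpose :: "('o, 'm::ab_group_add) mcat \<Rightarrow> ('i \<Rightarrow> 'o)
    \<Rightarrow> (('i, 'm) hsp \<Rightarrow> ('i, 'm) hsp) \<Rightarrow> (('i, 'm) hsp \<Rightarrow> ('i, 'm) hsp) \<Rightarrow> bool" where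
  "is_transpose C V f g \<longleftrightarrow> hlinear C V g \<and>
     (\<forall>x\<in>Hspace C V. \<forall>y\<in>Hspace C V. pform C V (f x) y = pform C V x (g y))"

end

theory Submission
  imports Defs
begin

(* The identity
      of V_i (x) V_j resolves through the V_k, so every hat (check) morphism is determined
      by its pairings with check (hat) morphisms and every linear functional is represented
      by one.  Hence the form on H is nondegenerate.
   3. Any operator moving index t to tau t (tau an involution) by componentwise linear maps
      has an explicit transpose, obtained by representing functionals; A and B are of this
      form, which gives the existence of A* and B*.
   4. Zig-zag identities: a cup I -> V_c (x) V_c* is a multiple of b_c, so its two closures
      have the same scalar (dually for caps).  Rewriting the components of ABA and BAB as
      closures of one glued cup (cap) yields <ABA z, x> = <z, BAB x>.
   5. A*B*A* is then a transpose of ABA, and nondegeneracy gives A*B*A* = BAB. *)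

section \<open>Arrows: morphisms bundled with their source and target\<close>

text \<open>An arrow is a triple (source, target, morphism); composition and tensor product of
  arrows carry the objects along, so that the typing side conditions of long composites
  are discharged by simplification.\<close>

definition arr :: "('o, 'm::ab_group_add) mcat \<Rightarrow> 'o \<times> 'o \<times> 'm \<Rightarrow> bool" where
  "arr C F \<longleftrightarrow> snd (snd F) \<in> hom C (fst F) (fst (snd F))"

definition acomp :: "('o, 'm::ab_group_add) mcat \<Rightarrow> 'o \<times> 'o \<times> 'm \<Rightarrow> 'o \<times> 'o \<times> 'm \<Rightarrow> 'o \<times> 'o \<times> 'm" where
  "acomp C G F = (fst F, fst (snd G), cmp C (snd (snd G)) (snd (snd F)))"

definition atens :: "('o, 'm::ab_group_add) mcat \<Rightarrow> 'o \<times> 'o \<times> 'm \<Rightarrow> 'o \<times> 'o \<times> 'm \<Rightarrow> 'o \<times> 'o \<times> 'm" where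
  "atens C F G = (tno C (fst F) (fst G), tno C (fst (snd F)) (fst (snd G)),
     tnm C (snd (snd F)) (snd (snd G)))"

definition aid :: "('o, 'm::ab_group_add) mcat \<Rightarrow> 'o \<Rightarrow> 'o \<times> 'o \<times> 'm" where
  "aid C X = (X, X, idm C X)"

lemma acomp_simps [simp]:
  "fst (acomp C G F) = fst F" "fst (snd (acomp C G F)) = fst (snd G)"
  "snd (snd (acomp C G F)) = cmp C (snd (snd G)) (snd (snd F))"
  by (simp_all add: acomp_def)

lemma atens_simps [simp]:
  "fst (atens C F G) = tno C (fst F) (fst G)"
  "fst (snd (atens C F G)) = tno C (fst (snd F)) (fst (snd G))"
  "snd (snd (atens C F G)) = tnm C (snd (snd F)) (snd (snd G))"
  by (simp_all add: atens_def)

lemma aid_simps [simp]: "fst (aid C X) = X" "fst (snd (aid C X)) = X" "snd (snd (aid C X)) = idm C X"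
  by (simp_all add: aid_def)

lemma arr_triple [simp]: "arr C (U, W, f) \<longleftrightarrow> f \<in> hom C U W"
  by (simp add: arr_def)

lemma triple_eqI:
  "fst F = fst G \<Longrightarrow> fst (snd F) = fst (snd G) \<Longrightarrow> snd (snd F) = snd (snd G) \<Longrightarrow> F = G"
  by (simp add: prod_eq_iff)


section \<open>Monoidal Ab-categories\<close>

locale ab_monoidal =
  fixes C :: "('o, 'm::ab_group_add) mcat"
  assumes hom_subgroup: "\<forall>U V. 0 \<in> hom C U V \<and> (\<forall>f\<in>hom C U V. \<forall>g\<in>hom C U V. f + g \<in> hom C U V)
           \<and> (\<forall>f\<in>hom C U V. - f \<in> hom C U V)"
  and cmp_closed: "\<forall>U V W f g. f \<in> hom C U V \<longrightarrow> g \<in> hom C V W \<longrightarrow> cmp C g f \<in> hom C U W"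
  and idm_closed: "\<forall>U. idm C U \<in> hom C U U"
  and cmp_id: "\<forall>U V f. f \<in> hom C U V \<longrightarrow> cmp C (idm C V) f = f \<and> cmp C f (idm C U) = f"
  and cmp_assoc_ax: "\<forall>U V W X f g h. f \<in> hom C U V \<longrightarrow> g \<in> hom C V W \<longrightarrow> h \<in> hom C W X \<longrightarrow>
        cmp C h (cmp C g f) = cmp C (cmp C h g) f"
  and cmp_addr_ax: "\<forall>U V W f f' g. f \<in> hom C U V \<longrightarrow> f' \<in> hom C U V \<longrightarrow> g \<in> hom C V W \<longrightarrow>
        cmp C g (f + f') = cmp C g f + cmp C g f'"
  and cmp_addl_ax: "\<forall>U V W f g g'. f \<in> hom C U V \<longrightarrow> g \<in> hom C V W \<longrightarrow> g' \<in> hom C V W \<longrightarrow>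
        cmp C (g + g') f = cmp C g f + cmp C g' f"
  and tnm_closed: "\<forall>U V U' V' f g. f \<in> hom C U V \<longrightarrow> g \<in> hom C U' V' \<longrightarrow>
        tnm C f g \<in> hom C (tno C U U') (tno C V V')"
  and tno_assoc_ax: "\<forall>U V W. tno C (tno C U V) W = tno C U (tno C V W)"
  and tnm_assoc_ax: "\<forall>U V U' V' U'' V'' f g h. f \<in> hom C U V \<longrightarrow> g \<in> hom C U' V' \<longrightarrow> h \<in> hom C U'' V'' \<longrightarrow>
        tnm C (tnm C f g) h = tnm C f (tnm C g h)"
  and tno_unit_ax: "\<forall>U. tno C (unit C) U = U \<and> tno C U (unit C) = U"
  and tnm_unit_ax: "\<forall>U V f. f \<in> hom C U V \<longrightarrow> tnm C (idm C (unit C)) f = f \<and> tnm C f (idm C (unit C)) = f"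
  and tnm_id_ax: "\<forall>U V. tnm C (idm C U) (idm C V) = idm C (tno C U V)"
  and interchange_ax: "\<forall>U V W U' V' W' f g f' g'. f \<in> hom C U V \<longrightarrow> g \<in> hom C V W \<longrightarrow>
        f' \<in> hom C U' V' \<longrightarrow> g' \<in> hom C V' W' \<longrightarrow>
        cmp C (tnm C g g') (tnm C f f') = tnm C (cmp C g f) (cmp C g' f')"
  and tnm_add_ax: "\<forall>U V U' V' f f' g. f \<in> hom C U V \<longrightarrow> f' \<in> hom C U V \<longrightarrow> g \<in> hom C U' V' \<longrightarrow>
        tnm C (f + f') g = tnm C f g + tnm C f' g \<and> tnm C g (f + f') = tnm C g f + tnm C g f'"
  and ground_one_ne0: "idm C (unit C) \<noteq> 0"
  and ground_comm_ax: "\<forall>a\<in>ground C. \<forall>c\<in>ground C. cmp C a c = cmp C c a"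
  and ground_inv_ax: "\<forall>a\<in>ground C. a \<noteq> 0 \<longrightarrow> (\<exists>c\<in>ground C. cmp C c a = idm C (unit C))"
  and tnm_scalar_ax: "\<forall>c\<in>ground C. \<forall>U V U' V' f g. f \<in> hom C U V \<longrightarrow> g \<in> hom C U' V' \<longrightarrow>
        tnm C (tnm C c f) g = tnm C c (tnm C f g) \<and> tnm C f (tnm C c g) = tnm C c (tnm C f g)"

lemma ab_monoidal_if_smab_cat: "smab_cat C \<Longrightarrow> ab_monoidal C"
  unfolding smab_cat_def ab_monoidal_def by (elim conjE) (intro conjI; assumption)


context ab_monoidal
begin

abbreviation I where "I \<equiv> unit C"

lemma hom0 [simp, intro]: "0 \<in> hom C U W"
  using hom_subgroup by blast
lemma hom_add [intro]: "f \<in> hom C U W \<Longrightarrow> g \<in> hom C U W \<Longrightarrow> f + g \<in> hom C U W"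
  using hom_subgroup by blast
lemma hom_uminus [intro]: "f \<in> hom C U W \<Longrightarrow> - f \<in> hom C U W"
  using hom_subgroup by blast
lemma hom_diff [intro]: "f \<in> hom C U W \<Longrightarrow> g \<in> hom C U W \<Longrightarrow> f - g \<in> hom C U W"
  unfolding diff_conv_add_uminus by (intro hom_add hom_uminus)
lemma hom_sum [intro]: "(\<And>x. x \<in> S \<Longrightarrow> f x \<in> hom C U W) \<Longrightarrow> sum f S \<in> hom C U W"
  by (induction S rule: infinite_finite_induct) auto
lemma hom_sum_list [intro]:
  "(\<And>x. x \<in> set xs \<Longrightarrow> f x \<in> hom C U W) \<Longrightarrow> sum_list (map f xs) \<in> hom C U W"
  by (induction xs) auto

lemma cmp_hom [intro]: "f \<in> hom C U W \<Longrightarrow> g \<in> hom C W X \<Longrightarrow> cmp C g f \<in> hom C U X"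
  using cmp_closed by blast
lemma idm_hom [simp, intro]: "idm C U \<in> hom C U U"
  using idm_closed by blast
lemma cmp_idl: "f \<in> hom C U W \<Longrightarrow> cmp C (idm C W) f = f"
  using cmp_id by blast
lemma cmp_idr: "f \<in> hom C U W \<Longrightarrow> cmp C f (idm C U) = f"
  using cmp_id by blast
lemma cmp_assoc: "f \<in> hom C U W \<Longrightarrow> g \<in> hom C W X \<Longrightarrow> h \<in> hom C X Y \<Longrightarrow>
    cmp C h (cmp C g f) = cmp C (cmp C h g) f"
  using cmp_assoc_ax by blast
lemma cmp_addr: "f \<in> hom C U W \<Longrightarrow> f' \<in> hom C U W \<Longrightarrow> g \<in> hom C W X \<Longrightarrow>
    cmp C g (f + f') = cmp C g f + cmp C g f'"
  using cmp_addr_ax by blast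
lemma cmp_addl: "f \<in> hom C U W \<Longrightarrow> g \<in> hom C W X \<Longrightarrow> g' \<in> hom C W X \<Longrightarrow>
    cmp C (g + g') f = cmp C g f + cmp C g' f"
  using cmp_addl_ax by blast
lemma tnm_hom [intro]:
  "f \<in> hom C U W \<Longrightarrow> g \<in> hom C U' W' \<Longrightarrow> tnm C f g \<in> hom C (tno C U U') (tno C W W')"
  using tnm_closed by blast
lemma tno_assoc [simp]: "tno C (tno C U W) X = tno C U (tno C W X)"
  using tno_assoc_ax by blast
lemma tno_unit [simp]: "tno C I U = U" "tno C U I = U"
  using tno_unit_ax by blast+
lemma tnm_assoc: "f \<in> hom C U W \<Longrightarrow> g \<in> hom C U' W' \<Longrightarrow> h \<in> hom C U'' W'' \<Longrightarrow>
    tnm C (tnm C f g) h = tnm C f (tnm C g h)"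
  using tnm_assoc_ax by blast
lemma tnm_unitl: "f \<in> hom C U W \<Longrightarrow> tnm C (idm C I) f = f"
  using tnm_unit_ax by blast
lemma tnm_unitr: "f \<in> hom C U W \<Longrightarrow> tnm C f (idm C I) = f"
  using tnm_unit_ax by blast
lemma tnm_id [simp]: "tnm C (idm C U) (idm C W) = idm C (tno C U W)"
  using tnm_id_ax by blast
lemma interchange: "f \<in> hom C U W \<Longrightarrow> g \<in> hom C W X \<Longrightarrow> f' \<in> hom C U' W' \<Longrightarrow> g' \<in> hom C W' X' \<Longrightarrow>
    cmp C (tnm C g g') (tnm C f f') = tnm C (cmp C g f) (cmp C g' f')"
  using interchange_ax by blast
lemma tnm_addl: "f \<in> hom C U W \<Longrightarrow> f' \<in> hom C U W \<Longrightarrow> g \<in> hom C U' W' \<Longrightarrow>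
    tnm C (f + f') g = tnm C f g + tnm C f' g"
  using tnm_add_ax by blast
lemma tnm_addr: "f \<in> hom C U W \<Longrightarrow> f' \<in> hom C U W \<Longrightarrow> g \<in> hom C U' W' \<Longrightarrow>
    tnm C g (f + f') = tnm C g f + tnm C g f'"
  using tnm_add_ax by blast
lemma ground_comm: "a \<in> ground C \<Longrightarrow> c \<in> ground C \<Longrightarrow> cmp C a c = cmp C c a"
  using ground_comm_ax by blast
lemma ground_inv: "a \<in> ground C \<Longrightarrow> a \<noteq> 0 \<Longrightarrow> \<exists>c\<in>ground C. cmp C c a = idm C I"
  using ground_inv_ax by blast
lemma tnm_scl: "c \<in> ground C \<Longrightarrow> f \<in> hom C U W \<Longrightarrow> g \<in> hom C U' W' \<Longrightarrow>
    tnm C (tnm C c f) g = tnm C c (tnm C f g)"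
  using tnm_scalar_ax by blast
lemma tnm_scr: "c \<in> ground C \<Longrightarrow> f \<in> hom C U W \<Longrightarrow> g \<in> hom C U' W' \<Longrightarrow>
    tnm C f (tnm C c g) = tnm C c (tnm C f g)"
  using tnm_scalar_ax by blast

lemma cmp_0r: "g \<in> hom C W X \<Longrightarrow> cmp C g 0 = 0"
  using cmp_addr[of 0 W W 0 g X] by simp
lemma cmp_0l: "f \<in> hom C U W \<Longrightarrow> cmp C 0 f = 0"
  using cmp_addl[of f U W 0 W 0] by simp
lemma tnm_0l: "g \<in> hom C U' W' \<Longrightarrow> tnm C 0 g = 0"
  using tnm_addl[of 0 I I 0 g] by simp
lemma tnm_0r: "g \<in> hom C U' W' \<Longrightarrow> tnm C g 0 = 0"
  using tnm_addr[of 0 I I 0 g] by simp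
lemma tnm_minusl: "f \<in> hom C U W \<Longrightarrow> g \<in> hom C U' W' \<Longrightarrow> tnm C (- f) g = - tnm C f g"
  using tnm_addl[of "- f" U W f g] tnm_0l[of g] by (simp add: hom_uminus eq_neg_iff_add_eq_0)

lemma cmp_sum_right:
  assumes "\<And>x. x \<in> S \<Longrightarrow> f x \<in> hom C U W" and "g \<in> hom C W X"
  shows "cmp C g (sum f S) = (\<Sum>x\<in>S. cmp C g (f x))"
  using assms(1)
proof (induction S rule: infinite_finite_induct)
  case (insert x F)
  then have "sum f F \<in> hom C U W" by (intro hom_sum) auto
  with insert assms(2) show ?case by (simp add: cmp_addr[of "f x" U W "sum f F" g X])
qed (simp_all add: cmp_0r[OF assms(2)])

lemma cmp_sum_list_right:
  assumes "\<And>x. x \<in> set xs \<Longrightarrow> f x \<in> hom C U W" and "g \<in> hom C W X"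
  shows "cmp C g (sum_list (map f xs)) = sum_list (map (\<lambda>x. cmp C g (f x)) xs)"
  using assms(1)
proof (induction xs)
  case (Cons x xs)
  then have "sum_list (map f xs) \<in> hom C U W" by (intro hom_sum_list) auto
  with Cons assms(2) show ?case by (simp add: cmp_addr[of "f x" U W "sum_list (map f xs)" g X])
qed (simp add: cmp_0r[OF assms(2)])

lemma cmp_sum_list_left:
  assumes "f \<in> hom C U W" and "\<And>x. x \<in> set xs \<Longrightarrow> g x \<in> hom C W X"
  shows "cmp C (sum_list (map g xs)) f = sum_list (map (\<lambda>x. cmp C (g x) f) xs)"
  using assms(2)
proof (induction xs)
  case (Cons x xs)
  then have "sum_list (map g xs) \<in> hom C W X" by (intro hom_sum_list) auto
  with Cons assms(1) show ?case by (simp add: cmp_addl[of f U W "g x" X "sum_list (map g xs)"])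
qed (simp add: cmp_0l[OF assms(1)])

lemma arr_acomp [simp]: "arr C G \<Longrightarrow> arr C F \<Longrightarrow> fst G = fst (snd F) \<Longrightarrow> arr C (acomp C G F)"
  unfolding arr_def by (auto intro: cmp_hom)
lemma arr_atens [simp]: "arr C G \<Longrightarrow> arr C F \<Longrightarrow> arr C (atens C F G)"
  unfolding arr_def by (auto intro: tnm_hom)
lemma arr_aid [simp]: "arr C (aid C X)"
  unfolding arr_def by simp

lemma acomp_assoc: "arr C F \<Longrightarrow> arr C G \<Longrightarrow> arr C H \<Longrightarrow> fst G = fst (snd F) \<Longrightarrow> fst H = fst (snd G) \<Longrightarrow>
    acomp C H (acomp C G F) = acomp C (acomp C H G) F"
  unfolding arr_def by (rule triple_eqI) (auto intro: cmp_assoc)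
lemma acomp_idl: "arr C F \<Longrightarrow> X = fst (snd F) \<Longrightarrow> acomp C (aid C X) F = F"
  unfolding arr_def by (rule triple_eqI) (auto intro: cmp_idl)
lemma acomp_idr: "arr C F \<Longrightarrow> X = fst F \<Longrightarrow> acomp C F (aid C X) = F"
  unfolding arr_def by (rule triple_eqI) (auto intro: cmp_idr)
lemma atens_assoc: "arr C F \<Longrightarrow> arr C G \<Longrightarrow> arr C H \<Longrightarrow> atens C (atens C F G) H = atens C F (atens C G H)"
  unfolding arr_def by (rule triple_eqI) (auto intro: tnm_assoc)
lemma atens_id: "atens C (aid C X) (aid C Y) = aid C (tno C X Y)"
  by (rule triple_eqI) auto
lemma atens_unitl: "arr C F \<Longrightarrow> atens C (aid C I) F = F"
  unfolding arr_def by (rule triple_eqI) (auto intro: tnm_unitl)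
lemma atens_unitr: "arr C F \<Longrightarrow> atens C F (aid C I) = F"
  unfolding arr_def by (rule triple_eqI) (auto intro: tnm_unitr)
lemma ainterchange:
  "arr C F \<Longrightarrow> arr C G \<Longrightarrow> arr C F' \<Longrightarrow> arr C G' \<Longrightarrow> fst G = fst (snd F) \<Longrightarrow> fst G' = fst (snd F') \<Longrightarrow>
    acomp C (atens C G G') (atens C F F') = atens C (acomp C G F) (acomp C G' F')"
  unfolding arr_def by (rule triple_eqI) (auto intro: interchange)

lemma atens_acomp_right: "arr C F \<Longrightarrow> arr C G \<Longrightarrow> fst G = fst (snd F) \<Longrightarrow>
    atens C (aid C X) (acomp C G F) = acomp C (atens C (aid C X) G) (atens C (aid C X) F)"
  by (subst ainterchange) (simp_all add: acomp_idl)
lemma atens_acomp_left: "arr C F \<Longrightarrow> arr C G \<Longrightarrow> fst G = fst (snd F) \<Longrightarrow>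
    atens C (acomp C G F) (aid C X) = acomp C (atens C G (aid C X)) (atens C F (aid C X))"
  by (subst ainterchange) (simp_all add: acomp_idl)
lemma slide_left_first: "arr C F \<Longrightarrow> arr C G \<Longrightarrow>
    atens C F G = acomp C (atens C (aid C (fst (snd F))) G) (atens C F (aid C (fst G)))"
  by (subst ainterchange) (simp_all add: acomp_idl acomp_idr)
lemma slide_right_first: "arr C F \<Longrightarrow> arr C G \<Longrightarrow>
    atens C F G = acomp C (atens C F (aid C (fst (snd G)))) (atens C (aid C (fst F)) G)"
  by (subst ainterchange) (simp_all add: acomp_idl acomp_idr)

text \<open>The ground field k = End(I) acts on every hom-set by tensoring; this action commutes
  with composition and tensor product.\<close>

lemma scalar_hom [intro]: "c \<in> ground C \<Longrightarrow> f \<in> hom C U W \<Longrightarrow> tnm C c f \<in> hom C U W"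
  using tnm_hom[of c I I f U W] by simp
lemma ground_tnm_eq_cmp: "c \<in> ground C \<Longrightarrow> d \<in> ground C \<Longrightarrow> tnm C c d = cmp C c d"
  using interchange[of "idm C I" I I c I d I I "idm C I" I]
  by (simp add: cmp_idl cmp_idr tnm_unitl tnm_unitr)
lemma cmp_scalar_right: "c \<in> ground C \<Longrightarrow> f \<in> hom C U W \<Longrightarrow> g \<in> hom C W X \<Longrightarrow>
    cmp C g (tnm C c f) = tnm C c (cmp C g f)"
  using interchange[of c I I "idm C I" I f U W g X] tnm_unitl[of g W X] by (simp add: cmp_idl)
lemma cmp_scalar_left: "c \<in> ground C \<Longrightarrow> f \<in> hom C U W \<Longrightarrow> g \<in> hom C W X \<Longrightarrow>
    cmp C (tnm C c g) f = tnm C c (cmp C g f)"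
  using interchange[of "idm C I" I I c I f U W g X] tnm_unitl[of f U W] by (simp add: cmp_idr)
lemma scalar_scalar: "c \<in> ground C \<Longrightarrow> d \<in> ground C \<Longrightarrow> f \<in> hom C U W \<Longrightarrow>
    tnm C c (tnm C d f) = tnm C (cmp C c d) f"
  using tnm_assoc[of c I I d I I f U W] ground_tnm_eq_cmp[of c d] by simp

text \<open>On a simple object X the map c \<mapsto> c Id_X is injective (k is a field and Id_X \<noteq> 0),
  so scal C X is a well-defined k-linear inverse on End(X).\<close>

lemma scalar_id_injective:
  assumes X: "simple_obj C X" and c: "c \<in> ground C" and d: "d \<in> ground C"
    and eq: "tnm C c (idm C X) = tnm C d (idm C X)"
  shows "c = d"
proof (rule ccontr)
  assume "c \<noteq> d"
  then have "c - d \<noteq> 0" by simp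
  moreover have cd: "c - d \<in> ground C" using c d by (rule hom_diff)
  ultimately obtain e where e: "e \<in> ground C" "cmp C e (c - d) = idm C I"
    using ground_inv by blast
  have "tnm C (c - d) (idm C X) = 0"
    using eq c d tnm_addl[of c I I "- d" "idm C X" X X] tnm_minusl[of d I I "idm C X" X X]
    by (simp add: hom_uminus)
  then have "tnm C e (tnm C (c - d) (idm C X)) = 0" using tnm_0r[of e I I] e by simp
  moreover have "tnm C e (tnm C (c - d) (idm C X)) = idm C X"
    using e cd scalar_scalar[of e "c - d" "idm C X" X X] tnm_unitl[of "idm C X" X X] by simp
  ultimately have "idm C X = 0" by simp
  then show False using X unfolding simple_obj_def by simp
qed

lemma scal_scalar_id [simp]:
  assumes "simple_obj C X" and "c \<in> ground C"
  shows "scal C X (tnm C c (idm C X)) = c"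
  unfolding scal_def
  by (rule the_equality) (use assms scalar_id_injective in auto)

lemma scal_endo:
  assumes X: "simple_obj C X" and f: "f \<in> hom C X X"
  shows "scal C X f \<in> ground C" "tnm C (scal C X f) (idm C X) = f"
proof -
  obtain c where "c \<in> ground C" "f = tnm C c (idm C X)"
    using X f unfolding simple_obj_def by blast
  then show "scal C X f \<in> ground C" "tnm C (scal C X f) (idm C X) = f"
    using X by simp_all
qed

lemma scal_add:
  assumes X: "simple_obj C X" and "f \<in> hom C X X" "g \<in> hom C X X"
  shows "scal C X (f + g) = scal C X f + scal C X g"
proof -
  have "f + g = tnm C (scal C X f + scal C X g) (idm C X)"
    using scal_endo[OF X assms(2)] scal_endo[OF X assms(3)] by (simp add: tnm_addl[of _ I I _ "idm C X" X X])
  then show ?thesis using scal_endo[OF X assms(2)] scal_endo[OF X assms(3)] X by (simp add: hom_add)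
qed

lemma scal_smult:
  assumes X: "simple_obj C X" and c: "c \<in> ground C" and f: "f \<in> hom C X X"
  shows "scal C X (tnm C c f) = cmp C c (scal C X f)"
proof -
  have "tnm C c f = tnm C (cmp C c (scal C X f)) (idm C X)"
    using scal_endo[OF X f] c by (metis scalar_scalar idm_hom)
  then show ?thesis using scal_endo[OF X f] c X by (simp add: cmp_hom)
qed

lemma scal_zero [simp]: "simple_obj C X \<Longrightarrow> scal C X 0 = 0"
  using scal_scalar_id[of X 0] tnm_0l[of "idm C X" X X] by simp

lemma scal_sum_list:
  assumes X: "simple_obj C X" and "\<And>x. x \<in> set xs \<Longrightarrow> f x \<in> hom C X X"
  shows "scal C X (sum_list (map f xs)) = sum_list (map (\<lambda>x. scal C X (f x)) xs)"
  using assms(2)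
proof (induction xs)
  case (Cons x xs)
  then have "sum_list (map f xs) \<in> hom C X X" by (intro hom_sum_list) auto
  with Cons X show ?case by (simp add: scal_add)
qed (simp add: X)

end

section \<open>Psi-systems\<close>

locale psi = ab_monoidal C for C :: "('o, 'm::ab_group_add) mcat" +
  fixes V :: "'i \<Rightarrow> 'o" and st :: "'i \<Rightarrow> 'i" and bb dd :: "'i \<Rightarrow> 'm"
  assumes simple_ax: "\<forall>i. simple_obj C (V i)"
    and hom_distinct_ax: "\<forall>i j. i \<noteq> j \<longrightarrow> hom C (V i) (V j) = {0}"
    and st_invol_ax: "\<forall>i. st (st i) = i"
    and duality_hom_ax: "\<forall>i. bb i \<in> hom C (unit C) (tno C (V i) (V (st i)))
          \<and> dd i \<in> hom C (tno C (V i) (V (st i))) (unit C)"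
    and zigzag_ax: "\<forall>i. cmp C (tnm C (idm C (V i)) (dd (st i))) (tnm C (bb i) (idm C (V i))) = idm C (V i)
          \<and> cmp C (tnm C (dd i) (idm C (V i))) (tnm C (idm C (V i)) (bb (st i))) = idm C (V i)"
    and resolution_ax: "\<forall>i j. (\<exists>k. hom C (V k) (tno C (V i) (V j)) \<noteq> {0}) \<longrightarrow>
        (\<exists>ts :: ('i \<times> 'm \<times> 'm) list.
           (\<forall>(k, x, y) \<in> set ts. x \<in> hom C (V k) (tno C (V i) (V j))
                              \<and> y \<in> hom C (tno C (V i) (V j)) (V k))
         \<and> sum_list (map (\<lambda>(k, x, y). cmp C x y) ts) = idm C (tno C (V i) (V j)))"

lemma psi_if_psi_system: "smab_cat C \<Longrightarrow> psi_system C V st bb dd \<Longrightarrow> psi C V st bb dd"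
  unfolding psi_def psi_axioms_def psi_system_def
  by (intro conjI ab_monoidal_if_smab_cat) (elim conjE; assumption)+

context psi
begin

lemma simple [simp]: "simple_obj C (V i)"
  using simple_ax by blast
lemma hom_distinct_zero: "k \<noteq> k' \<Longrightarrow> f \<in> hom C (V k) (V k') \<Longrightarrow> f = 0"
  using hom_distinct_ax by blast
lemma st_st [simp]: "st (st i) = i"
  using st_invol_ax by blast
lemma bb_hom [simp, intro]: "bb i \<in> hom C I (tno C (V i) (V (st i)))"
  using duality_hom_ax by blast
lemma dd_hom [simp, intro]: "dd i \<in> hom C (tno C (V i) (V (st i))) I"
  using duality_hom_ax by blast
lemma zigzag:
  "cmp C (tnm C (idm C (V i)) (dd (st i))) (tnm C (bb i) (idm C (V i))) = idm C (V i)"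
  "cmp C (tnm C (dd i) (idm C (V i))) (tnm C (idm C (V i)) (bb (st i))) = idm C (V i)"
  using zigzag_ax by blast+

definition bb_arr :: "'i \<Rightarrow> 'o \<times> 'o \<times> 'm" where
  "bb_arr i = (I, tno C (V i) (V (st i)), bb i)"
definition dd_arr :: "'i \<Rightarrow> 'o \<times> 'o \<times> 'm" where
  "dd_arr i = (tno C (V i) (V (st i)), I, dd i)"

lemma bb_arr_simps [simp]: "fst (bb_arr i) = I" "fst (snd (bb_arr i)) = tno C (V i) (V (st i))"
  "snd (snd (bb_arr i)) = bb i" "arr C (bb_arr i)"
  by (simp_all add: bb_arr_def)
lemma dd_arr_simps [simp]: "fst (dd_arr i) = tno C (V i) (V (st i))" "fst (snd (dd_arr i)) = I"
  "snd (snd (dd_arr i)) = dd i" "arr C (dd_arr i)"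
  by (simp_all add: dd_arr_def)

lemma zigzag_arr:
  "acomp C (atens C (aid C (V i)) (dd_arr (st i))) (atens C (bb_arr i) (aid C (V i))) = aid C (V i)"
  "acomp C (atens C (dd_arr i) (aid C (V i))) (atens C (aid C (V i)) (bb_arr (st i))) = aid C (V i)"
  by (rule triple_eqI; simp add: zigzag)+


text \<open>Ah and Ac rotate the first tensor factor of a hat resp. check morphism to the other side
  (the components of A), Bh and Bc rotate the second one (the components of B).\<close>

definition Ah :: "'i \<Rightarrow> 'i \<Rightarrow> 'm \<Rightarrow> 'm" where
  "Ah i j x = cmp C (tnm C (idm C (V (st i))) x) (tnm C (bb (st i)) (idm C (V j)))"
definition Ac :: "'i \<Rightarrow> 'i \<Rightarrow> 'm \<Rightarrow> 'm" where
  "Ac i j w = cmp C (tnm C (dd (st i)) (idm C (V j))) (tnm C (idm C (V (st i))) w)"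
definition Bh :: "'i \<Rightarrow> 'i \<Rightarrow> 'm \<Rightarrow> 'm" where
  "Bh i j x = cmp C (tnm C x (idm C (V (st j)))) (tnm C (idm C (V i)) (bb j))"
definition Bc :: "'i \<Rightarrow> 'i \<Rightarrow> 'm \<Rightarrow> 'm" where
  "Bc i j w = cmp C (tnm C (idm C (V i)) (dd j)) (tnm C w (idm C (V (st j))))"

definition Ah_arr :: "'i \<Rightarrow> 'i \<Rightarrow> 'o \<times> 'o \<times> 'm \<Rightarrow> 'o \<times> 'o \<times> 'm" where
  "Ah_arr i j X = acomp C (atens C (aid C (V (st i))) X) (atens C (bb_arr (st i)) (aid C (V j)))"
definition Ac_arr :: "'i \<Rightarrow> 'i \<Rightarrow> 'o \<times> 'o \<times> 'm \<Rightarrow> 'o \<times> 'o \<times> 'm" where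
  "Ac_arr i j W = acomp C (atens C (dd_arr (st i)) (aid C (V j))) (atens C (aid C (V (st i))) W)"
definition Bh_arr :: "'i \<Rightarrow> 'i \<Rightarrow> 'o \<times> 'o \<times> 'm \<Rightarrow> 'o \<times> 'o \<times> 'm" where
  "Bh_arr i j X = acomp C (atens C X (aid C (V (st j)))) (atens C (aid C (V i)) (bb_arr j))"
definition Bc_arr :: "'i \<Rightarrow> 'i \<Rightarrow> 'o \<times> 'o \<times> 'm \<Rightarrow> 'o \<times> 'o \<times> 'm" where
  "Bc_arr i j W = acomp C (atens C (aid C (V i)) (dd_arr j)) (atens C W (aid C (V (st j))))"

lemma Ah_arr_eq [simp]: "Ah_arr i j (U, W, x) = (V j, tno C (V (st i)) W, Ah i j x)"
  by (simp add: Ah_arr_def Ah_def acomp_def atens_def aid_def bb_arr_def)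
lemma Ac_arr_eq [simp]: "Ac_arr i j (U, W, x) = (tno C (V (st i)) U, V j, Ac i j x)"
  by (simp add: Ac_arr_def Ac_def acomp_def atens_def aid_def dd_arr_def)
lemma Bh_arr_eq [simp]: "Bh_arr i j (U, W, x) = (V i, tno C W (V (st j)), Bh i j x)"
  by (simp add: Bh_arr_def Bh_def acomp_def atens_def aid_def bb_arr_def)
lemma Bc_arr_eq [simp]: "Bc_arr i j (U, W, x) = (tno C U (V (st j)), V i, Bc i j x)"
  by (simp add: Bc_arr_def Bc_def acomp_def atens_def aid_def dd_arr_def)

lemma Ah_hom [intro]:
  assumes "x \<in> hom C (tno C (V i) (V j)) W"
  shows "Ah i j x \<in> hom C (V j) (tno C (V (st i)) W)"
proof -
  have "arr C (Ah_arr i j (tno C (V i) (V j), W, x))" using assms unfolding Ah_arr_def by simp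
  then show ?thesis by simp
qed
lemma Ac_hom [intro]:
  assumes "x \<in> hom C U (tno C (V i) (V j))"
  shows "Ac i j x \<in> hom C (tno C (V (st i)) U) (V j)"
proof -
  have "arr C (Ac_arr i j (U, tno C (V i) (V j), x))" using assms unfolding Ac_arr_def by simp
  then show ?thesis by simp
qed
lemma Bh_hom [intro]:
  assumes "x \<in> hom C (tno C (V i) (V j)) W"
  shows "Bh i j x \<in> hom C (V i) (tno C W (V (st j)))"
proof -
  have "arr C (Bh_arr i j (tno C (V i) (V j), W, x))" using assms unfolding Bh_arr_def by simp
  then show ?thesis by simp
qed
lemma Bc_hom [intro]:
  assumes "x \<in> hom C U (tno C (V i) (V j))"
  shows "Bc i j x \<in> hom C (tno C U (V (st j))) (V i)"
proof -
  have "arr C (Bc_arr i j (U, tno C (V i) (V j), x))" using assms unfolding Bc_arr_def by simp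
  then show ?thesis by simp
qed

lemma Ah_linear:
  assumes x: "x \<in> hom C (tno C (V i) (V j)) W" and x': "x' \<in> hom C (tno C (V i) (V j)) W"
    and c: "c \<in> ground C"
  shows "Ah i j (x + x') = Ah i j x + Ah i j x'" "Ah i j (tnm C c x) = tnm C c (Ah i j x)"
proof -
  note f = tnm_hom[OF bb_hom idm_hom, of "st i" "V j", simplified]
  show "Ah i j (x + x') = Ah i j x + Ah i j x'"
    unfolding Ah_def using tnm_addr[OF x x' idm_hom] cmp_addl[OF f tnm_hom[OF idm_hom x] tnm_hom[OF idm_hom x']]
    by simp
  show "Ah i j (tnm C c x) = tnm C c (Ah i j x)"
    unfolding Ah_def using tnm_scr[OF c idm_hom x] cmp_scalar_left[OF c f tnm_hom[OF idm_hom x]] by simp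
qed
lemma Ac_linear:
  assumes x: "x \<in> hom C U (tno C (V i) (V j))" and x': "x' \<in> hom C U (tno C (V i) (V j))"
    and c: "c \<in> ground C"
  shows "Ac i j (x + x') = Ac i j x + Ac i j x'" "Ac i j (tnm C c x) = tnm C c (Ac i j x)"
proof -
  note f = tnm_hom[OF dd_hom idm_hom, of "st i" "V j", simplified]
  show "Ac i j (x + x') = Ac i j x + Ac i j x'"
    unfolding Ac_def using tnm_addr[OF x x' idm_hom] cmp_addr[OF tnm_hom[OF idm_hom x] tnm_hom[OF idm_hom x'] f]
    by simp
  show "Ac i j (tnm C c x) = tnm C c (Ac i j x)"
    unfolding Ac_def using tnm_scr[OF c idm_hom x] cmp_scalar_right[OF c tnm_hom[OF idm_hom x] f] by simp
qed
lemma Bh_linear: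
  assumes x: "x \<in> hom C (tno C (V i) (V j)) W" and x': "x' \<in> hom C (tno C (V i) (V j)) W"
    and c: "c \<in> ground C"
  shows "Bh i j (x + x') = Bh i j x + Bh i j x'" "Bh i j (tnm C c x) = tnm C c (Bh i j x)"
proof -
  note f = tnm_hom[OF idm_hom bb_hom, of "V i" j, simplified]
  note g = tnm_hom[OF x idm_hom[of "V (st j)"], simplified]
    and g' = tnm_hom[OF x' idm_hom[of "V (st j)"], simplified]
  show "Bh i j (x + x') = Bh i j x + Bh i j x'"
    unfolding Bh_def using tnm_addl[OF x x' idm_hom] cmp_addl[OF f g g'] by simp
  show "Bh i j (tnm C c x) = tnm C c (Bh i j x)"
    unfolding Bh_def using tnm_scl[OF c x idm_hom] cmp_scalar_left[OF c f g] by simp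
qed
lemma Bc_linear:
  assumes x: "x \<in> hom C U (tno C (V i) (V j))" and x': "x' \<in> hom C U (tno C (V i) (V j))"
    and c: "c \<in> ground C"
  shows "Bc i j (x + x') = Bc i j x + Bc i j x'" "Bc i j (tnm C c x) = tnm C c (Bc i j x)"
proof -
  note f = tnm_hom[OF idm_hom dd_hom, of "V i" j, simplified]
  note g = tnm_hom[OF x idm_hom[of "V (st j)"], simplified]
    and g' = tnm_hom[OF x' idm_hom[of "V (st j)"], simplified]
  show "Bc i j (x + x') = Bc i j x + Bc i j x'"
    unfolding Bc_def using tnm_addl[OF x x' idm_hom] cmp_addr[OF g g' f] by simp
  show "Bc i j (tnm C c x) = tnm C c (Bc i j x)"
    unfolding Bc_def using tnm_scl[OF c x idm_hom] cmp_scalar_right[OF c g f] by simp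
qed

lemma rotations_zero [simp]: "Ah i j 0 = 0" "Ac i j 0 = 0" "Bh i j 0 = 0" "Bc i j 0 = 0"
proof -
  show "Ah i j 0 = 0"
    unfolding Ah_def using tnm_0r[OF idm_hom] cmp_0l[OF tnm_hom[OF bb_hom idm_hom, of "st i" "V j", simplified]]
    by simp
  show "Ac i j 0 = 0"
    unfolding Ac_def using tnm_0r[OF idm_hom] cmp_0r[OF tnm_hom[OF dd_hom idm_hom, of "st i" "V j", simplified]]
    by simp
  show "Bh i j 0 = 0"
    unfolding Bh_def using tnm_0l[OF idm_hom] cmp_0l[OF tnm_hom[OF idm_hom bb_hom, of "V i" j, simplified]]
    by simp
  show "Bc i j 0 = 0"
    unfolding Bc_def using tnm_0l[OF idm_hom] cmp_0r[OF tnm_hom[OF idm_hom dd_hom, of "V i" j, simplified]]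
    by simp
qed

text \<open>Rotating a hat morphism and rotating back is the identity (zig-zag identity); in
  particular Ah is injective.\<close>

lemma Ac_Ah:
  assumes x: "x \<in> hom C (tno C (V i) (V j)) (V k)"
  shows "Ac (st i) k (Ah i j x) = x"
proof -
  define X where "X = (tno C (V i) (V j), V k, x)"
  have wX: "arr C X" and fX [simp]: "fst X = tno C (V i) (V j)" "fst (snd X) = V k"
    using x by (simp_all add: X_def)
  have "Ac_arr (st i) k (Ah_arr i j X) = acomp C (atens C (dd_arr i) (aid C (V k)))
     (atens C (aid C (V i)) (acomp C (atens C (aid C (V (st i))) X) (atens C (bb_arr (st i)) (aid C (V j)))))"
    by (simp add: Ac_arr_def Ah_arr_def)
  also have "\<dots> = acomp C (atens C (dd_arr i) (aid C (V k)))
     (acomp C (atens C (aid C (V i)) (atens C (aid C (V (st i))) X))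
       (atens C (aid C (V i)) (atens C (bb_arr (st i)) (aid C (V j)))))"
    using wX by (subst atens_acomp_right) simp_all
  also have "\<dots> = acomp C (atens C (dd_arr i) (aid C (V k)))
     (acomp C (atens C (aid C (tno C (V i) (V (st i)))) X)
       (atens C (atens C (aid C (V i)) (bb_arr (st i))) (aid C (V j))))"
    using wX by (simp add: atens_assoc[symmetric] atens_id)
  also have "\<dots> = acomp C (acomp C (atens C (dd_arr i) (aid C (V k))) (atens C (aid C (tno C (V i) (V (st i)))) X))
      (atens C (atens C (aid C (V i)) (bb_arr (st i))) (aid C (V j)))"
    using wX by (subst acomp_assoc) simp_all
  also have "acomp C (atens C (dd_arr i) (aid C (V k))) (atens C (aid C (tno C (V i) (V (st i)))) X)
      = atens C (dd_arr i) X"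
    using wX by (subst ainterchange) (simp_all add: acomp_idl acomp_idr)
  also have "atens C (dd_arr i) X = acomp C X (atens C (dd_arr i) (aid C (tno C (V i) (V j))))"
    using wX by (subst slide_left_first) (simp_all add: atens_unitl)
  also have "acomp C (acomp C X (atens C (dd_arr i) (aid C (tno C (V i) (V j)))))
      (atens C (atens C (aid C (V i)) (bb_arr (st i))) (aid C (V j)))
     = acomp C X (acomp C (atens C (dd_arr i) (aid C (tno C (V i) (V j))))
      (atens C (atens C (aid C (V i)) (bb_arr (st i))) (aid C (V j))))"
    using wX by (subst acomp_assoc) simp_all
  also have "atens C (dd_arr i) (aid C (tno C (V i) (V j))) = atens C (atens C (dd_arr i) (aid C (V i))) (aid C (V j))"
    by (simp add: atens_assoc atens_id)
  also have "acomp C (atens C (atens C (dd_arr i) (aid C (V i))) (aid C (V j)))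
      (atens C (atens C (aid C (V i)) (bb_arr (st i))) (aid C (V j)))
     = atens C (aid C (V i)) (aid C (V j))"
    by (subst ainterchange) (simp_all add: zigzag_arr acomp_idl)
  also have "acomp C X (atens C (aid C (V i)) (aid C (V j))) = X"
    using wX by (simp add: atens_id acomp_idr)
  finally show ?thesis unfolding X_def by simp
qed


definition resolution :: "'i \<Rightarrow> 'i \<Rightarrow> ('i \<times> 'm \<times> 'm) list \<Rightarrow> bool" where
  "resolution i j ts \<longleftrightarrow>
     (\<forall>(k, x, y) \<in> set ts. x \<in> hom C (V k) (tno C (V i) (V j)) \<and> y \<in> hom C (tno C (V i) (V j)) (V k))
   \<and> sum_list (map (\<lambda>(k, x, y). cmp C x y) ts) = idm C (tno C (V i) (V j))"

abbreviation resolvable :: "'i \<Rightarrow> 'i \<Rightarrow> bool" where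
  "resolvable i j \<equiv> \<exists>k. hom C (V k) (tno C (V i) (V j)) \<noteq> {0}"

definition dec :: "'i \<Rightarrow> 'i \<Rightarrow> ('i \<times> 'm \<times> 'm) list" where
  "dec i j = (if resolvable i j then SOME ts. resolution i j ts else [])"

lemma dec_resolution:
  assumes "resolvable i j"
  shows "resolution i j (dec i j)"
proof -
  have "\<exists>ts. resolution i j ts" using resolution_ax assms unfolding resolution_def by blast
  then have "resolution i j (SOME ts. resolution i j ts)" by (rule someI_ex)
  with assms show ?thesis unfolding dec_def by simp
qed

lemma dec_memberE:
  assumes "t \<in> set (dec i j)"
  obtains k x y where "t = (k, x, y)"
    "x \<in> hom C (V k) (tno C (V i) (V j))" "y \<in> hom C (tno C (V i) (V j)) (V k)"
proof -
  have "resolvable i j" using assms unfolding dec_def by (auto split: if_splits)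
  then show ?thesis
    using dec_resolution assms that unfolding resolution_def by (cases t) fastforce
qed

lemma dec_sum: "resolvable i j \<Longrightarrow> sum_list (map (\<lambda>(k, x, y). cmp C x y) (dec i j)) = idm C (tno C (V i) (V j))"
  using dec_resolution unfolding resolution_def by blast

lemma resolve_into:
  assumes w: "w \<in> hom C U (tno C (V i) (V j))" and r: "resolvable i j"
  shows "w = sum_list (map (\<lambda>(k, x, y). cmp C x (cmp C y w)) (dec i j))"
proof -
  have "w = cmp C (sum_list (map (\<lambda>(k, x, y). cmp C x y) (dec i j))) w"
    using w by (simp add: dec_sum[OF r] cmp_idl)
  also have "\<dots> = sum_list (map (\<lambda>t. cmp C ((\<lambda>(k, x, y). cmp C x y) t) w) (dec i j))"
    by (rule cmp_sum_list_left[OF w]) (auto elim: dec_memberE)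
  also have "\<dots> = sum_list (map (\<lambda>(k, x, y). cmp C x (cmp C y w)) (dec i j))"
    by (intro arg_cong[where f = sum_list] map_cong refl) (auto elim!: dec_memberE intro: cmp_assoc[OF w, symmetric])
  finally show ?thesis .
qed

lemma resolve_out_of:
  assumes h: "h \<in> hom C (tno C (V i) (V j)) W" and r: "resolvable i j"
  shows "h = sum_list (map (\<lambda>(k, x, y). cmp C (cmp C h x) y) (dec i j))"
proof -
  have "h = cmp C h (sum_list (map (\<lambda>(k, x, y). cmp C x y) (dec i j)))"
    using h by (simp add: dec_sum[OF r] cmp_idr)
  also have "\<dots> = sum_list (map (\<lambda>t. cmp C h ((\<lambda>(k, x, y). cmp C x y) t)) (dec i j))"
    by (rule cmp_sum_list_right[OF _ h]) (auto elim: dec_memberE)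
  also have "\<dots> = sum_list (map (\<lambda>(k, x, y). cmp C (cmp C h x) y) (dec i j))"
    by (intro arg_cong[where f = sum_list] map_cong refl) (auto elim!: dec_memberE intro: cmp_assoc[OF _ _ h])
  finally show ?thesis .
qed

text \<open>A morphism between simple objects V_k \<rightarrow> V_k' is a scalar multiple of the identity if
  k = k' and zero otherwise; composing with it is therefore a scalar multiplication.\<close>

lemma cmp_simple_before:
  assumes f: "f \<in> hom C (V k) (V k')" and x: "x \<in> hom C (V k') P"
  shows "cmp C x f = (if k' = k then tnm C (scal C (V k) f) x else 0)"
proof (cases "k' = k")
  case True
  have c: "scal C (V k) f \<in> ground C" and f_eq: "tnm C (scal C (V k) f) (idm C (V k)) = f"
    using scal_endo[OF simple] f True by simp_all
  have x: "x \<in> hom C (V k) P" using x True by simp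
  have "cmp C x f = cmp C x (tnm C (scal C (V k) f) (idm C (V k)))" by (simp add: f_eq)
  also have "\<dots> = tnm C (scal C (V k) f) x"
    by (simp add: cmp_scalar_right[OF c idm_hom x] cmp_idr[OF x])
  finally show ?thesis using True by simp
qed (use hom_distinct_zero[OF _ f] x in \<open>simp add: cmp_0r\<close>)

lemma cmp_simple_after:
  assumes f: "f \<in> hom C (V k') (V k)" and y: "y \<in> hom C P (V k')"
  shows "cmp C f y = (if k' = k then tnm C (scal C (V k) f) y else 0)"
proof (cases "k' = k")
  case True
  have c: "scal C (V k) f \<in> ground C" and f_eq: "tnm C (scal C (V k) f) (idm C (V k)) = f"
    using scal_endo[OF simple] f True by simp_all
  have y: "y \<in> hom C P (V k)" using y True by simp
  have "cmp C f y = cmp C (tnm C (scal C (V k) f) (idm C (V k))) y" by (simp add: f_eq)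
  also have "\<dots> = tnm C (scal C (V k) f) y"
    by (simp add: cmp_scalar_left[OF c y idm_hom] cmp_idl[OF y])
  finally show ?thesis using True by simp
qed (use hom_distinct_zero[OF _ f] y in \<open>simp add: cmp_0l\<close>)

lemma sum_list_nonzero: "sum_list (map f xs) \<noteq> (0::'a::monoid_add) \<Longrightarrow> \<exists>x\<in>set xs. f x \<noteq> 0"
  by (induction xs) auto

text \<open>Condition (4) only speaks about nonzero check morphisms; rotating shows that a nonzero hat
  morphism out of V_i \<otimes> V_j also forces a resolution of V_i \<otimes> V_j.\<close>

lemma resolvable_if_hat_nonzero:
  assumes h: "h \<in> hom C (tno C (V i) (V j)) (V k)" and nz: "h \<noteq> 0"
  shows "resolvable i j"
proof -
  define g where "g = Ah i j h"
  have g: "g \<in> hom C (V j) (tno C (V (st i)) (V k))" using Ah_hom[OF h] by (simp add: g_def)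
  have "g \<noteq> 0" using Ac_Ah[OF h] nz by (auto simp: g_def)
  then have "resolvable (st i) k" using g by blast
  then have "g = sum_list (map (\<lambda>(k', x, y). cmp C x (cmp C y g)) (dec (st i) k))"
    by (rule resolve_into[OF g])
  with \<open>g \<noteq> 0\<close> have "sum_list (map (\<lambda>(k', x, y). cmp C x (cmp C y g)) (dec (st i) k)) \<noteq> 0"
    by argo
  then obtain t where t: "t \<in> set (dec (st i) k)" and tnz: "(\<lambda>(k', x, y). cmp C x (cmp C y g)) t \<noteq> 0"
    by (blast dest: sum_list_nonzero)
  from t obtain k' x y where t_eq: "t = (k', x, y)" and x: "x \<in> hom C (V k') (tno C (V (st i)) (V k))"
    and y: "y \<in> hom C (tno C (V (st i)) (V k)) (V k')" by (rule dec_memberE)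
  have yg_nz: "cmp C y g \<noteq> 0" using tnz cmp_0r[OF x] by (auto simp: t_eq)
  have "y \<noteq> 0" using yg_nz cmp_0l[OF g] by auto
  have "cmp C y g \<in> hom C (V j) (V k')" using g y by (rule cmp_hom)
  then have "k' = j" using yg_nz hom_distinct_zero by metis
  with y have y: "y \<in> hom C (tno C (V (st i)) (V k)) (V j)" by simp
  have "Ah (st i) k y \<noteq> 0" using Ac_Ah[OF y] \<open>y \<noteq> 0\<close> by auto
  moreover have "Ah (st i) k y \<in> hom C (V k) (tno C (V i) (V j))" using Ah_hom[OF y] by simp
  ultimately show ?thesis by blast
qed

lemma check_expand:
  assumes w: "w \<in> hom C (V k) (tno C (V i) (V j))"
  shows "w = sum_list (map (\<lambda>(k', x, y). if k' = k then tnm C (scal C (V k) (cmp C y w)) x else 0) (dec i j))"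
proof (cases "resolvable i j")
  case True
  have "w = sum_list (map (\<lambda>(k', x, y). cmp C x (cmp C y w)) (dec i j))"
    by (rule resolve_into[OF w True])
  also have "\<dots> = sum_list (map (\<lambda>(k', x, y). if k' = k then tnm C (scal C (V k) (cmp C y w)) x else 0) (dec i j))"
  proof (intro arg_cong[where f = sum_list] map_cong refl)
    fix s assume "s \<in> set (dec i j)"
    then obtain k' x y where s: "s = (k', x, y)" and x: "x \<in> hom C (V k') (tno C (V i) (V j))"
      and y: "y \<in> hom C (tno C (V i) (V j)) (V k')" by (rule dec_memberE)
    have "cmp C y w \<in> hom C (V k) (V k')" using y w by blast
    from cmp_simple_before[OF this x] show "(\<lambda>(k', x, y). cmp C x (cmp C y w)) s =
        (\<lambda>(k', x, y). if k' = k then tnm C (scal C (V k) (cmp C y w)) x else 0) s"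
      by (simp add: s)
  qed
  finally show ?thesis .
next
  case False
  then show ?thesis using w by (auto simp: dec_def)
qed

lemma hat_expand:
  assumes h: "h \<in> hom C (tno C (V i) (V j)) (V k)"
  shows "h = sum_list (map (\<lambda>(k', x, y). if k' = k then tnm C (scal C (V k) (cmp C h x)) y else 0) (dec i j))"
proof (cases "resolvable i j")
  case True
  have "h = sum_list (map (\<lambda>(k', x, y). cmp C (cmp C h x) y) (dec i j))"
    by (rule resolve_out_of[OF h True])
  also have "\<dots> = sum_list (map (\<lambda>(k', x, y). if k' = k then tnm C (scal C (V k) (cmp C h x)) y else 0) (dec i j))"
  proof (intro arg_cong[where f = sum_list] map_cong refl)
    fix s assume "s \<in> set (dec i j)"
    then obtain k' x y where s: "s = (k', x, y)" and x: "x \<in> hom C (V k') (tno C (V i) (V j))"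
      and y: "y \<in> hom C (tno C (V i) (V j)) (V k')" by (rule dec_memberE)
    have "cmp C h x \<in> hom C (V k') (V k)" using x h by blast
    from cmp_simple_after[OF this y] show "(\<lambda>(k', x, y). cmp C (cmp C h x) y) s =
        (\<lambda>(k', x, y). if k' = k then tnm C (scal C (V k) (cmp C h x)) y else 0) s"
      by (simp add: s)
  qed
  finally show ?thesis .
next
  case False
  then show ?thesis using resolvable_if_hat_nonzero[OF h] by (auto simp: dec_def)
qed


section \<open>The space H and the form\<close>

definition hH :: "'i \<times> 'i \<times> 'i \<Rightarrow> 'm set" where
  "hH t = (case t of (i, j, k) \<Rightarrow> hom C (tno C (V i) (V j)) (V k))"
definition cH :: "'i \<times> 'i \<times> 'i \<Rightarrow> 'm set" where
  "cH t = (case t of (i, j, k) \<Rightarrow> hom C (V k) (tno C (V i) (V j)))"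
definition kk :: "'i \<times> 'i \<times> 'i \<Rightarrow> 'i" where
  "kk t = snd (snd t)"

lemma hH_simp [simp]: "hH (i, j, k) = hom C (tno C (V i) (V j)) (V k)" by (simp add: hH_def)
lemma cH_simp [simp]: "cH (i, j, k) = hom C (V k) (tno C (V i) (V j))" by (simp add: cH_def)
lemma kk_simp [simp]: "kk (i, j, k) = k" by (simp add: kk_def)

lemma hat_cmp_zero: "a \<in> hH t \<Longrightarrow> cmp C a 0 = 0"
  by (cases t) (auto intro: cmp_0r)
lemma zero_cmp_check: "b \<in> cH t \<Longrightarrow> cmp C 0 b = 0"
  by (cases t) (auto intro: cmp_0l)

lemma hat_check_endo: "a \<in> hH t \<Longrightarrow> b \<in> cH t \<Longrightarrow> cmp C a b \<in> hom C (V (kk t)) (V (kk t))"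
  by (cases t) (auto intro: cmp_hom)

lemma hat_determined:
  assumes h: "h \<in> hH t" and h': "h' \<in> hH t"
    and eq: "\<And>w. w \<in> cH t \<Longrightarrow> scal C (V (kk t)) (cmp C h w) = scal C (V (kk t)) (cmp C h' w)"
  shows "h = h'"
proof -
  obtain i j k where t: "t = (i, j, k)" by (cases t)
  have "h = sum_list (map (\<lambda>(k', x, y). if k' = k then tnm C (scal C (V k) (cmp C h x)) y else 0) (dec i j))"
    using h t by (intro hat_expand) simp
  also have "\<dots> = sum_list (map (\<lambda>(k', x, y). if k' = k then tnm C (scal C (V k) (cmp C h' x)) y else 0) (dec i j))"
    by (intro arg_cong[where f = sum_list] map_cong refl) (auto elim!: dec_memberE simp: eq[unfolded t, simplified])
  also have "\<dots> = h'"
    using h' t by (intro hat_expand[symmetric]) simp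
  finally show ?thesis .
qed

lemma check_determined:
  assumes w: "w \<in> cH t" and w': "w' \<in> cH t"
    and eq: "\<And>h. h \<in> hH t \<Longrightarrow> scal C (V (kk t)) (cmp C h w) = scal C (V (kk t)) (cmp C h w')"
  shows "w = w'"
proof -
  obtain i j k where t: "t = (i, j, k)" by (cases t)
  have "w = sum_list (map (\<lambda>(k', x, y). if k' = k then tnm C (scal C (V k) (cmp C y w)) x else 0) (dec i j))"
    using w t by (intro check_expand) simp
  also have "\<dots> = sum_list (map (\<lambda>(k', x, y). if k' = k then tnm C (scal C (V k) (cmp C y w')) x else 0) (dec i j))"
    by (intro arg_cong[where f = sum_list] map_cong refl) (auto elim!: dec_memberE simp: eq[unfolded t, simplified])
  also have "\<dots> = w'"
    using w' t by (intro check_expand[symmetric]) simp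
  finally show ?thesis .
qed

definition lin_functional :: "'m set \<Rightarrow> ('m \<Rightarrow> 'm) \<Rightarrow> bool" where
  "lin_functional S \<phi> \<longleftrightarrow> (\<forall>a\<in>S. \<phi> a \<in> ground C) \<and> (\<forall>a\<in>S. \<forall>b\<in>S. \<phi> (a + b) = \<phi> a + \<phi> b)
     \<and> (\<forall>c\<in>ground C. \<forall>a\<in>S. \<phi> (tnm C c a) = cmp C c (\<phi> a))"

lemma lin_functional_zero: "lin_functional (hom C U W) \<phi> \<Longrightarrow> \<phi> 0 = 0"
  unfolding lin_functional_def using hom0[of U W] by (metis add_cancel_right_right add_0)

lemma lin_functional_sum_list:
  assumes L: "lin_functional (hom C U W) \<phi>" and f: "\<And>x. x \<in> set xs \<Longrightarrow> f x \<in> hom C U W"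
  shows "\<phi> (sum_list (map f xs)) = sum_list (map (\<lambda>x. \<phi> (f x)) xs)"
  using f
proof (induction xs)
  case Nil then show ?case using lin_functional_zero[OF L] by simp
next
  case (Cons x xs)
  then have "sum_list (map f xs) \<in> hom C U W" by (intro hom_sum_list) auto
  then show ?case using Cons L unfolding lin_functional_def by simp
qed

definition rep_hat :: "'i \<times> 'i \<times> 'i \<Rightarrow> ('m \<Rightarrow> 'm) \<Rightarrow> 'm" where
  "rep_hat t \<phi> = (case t of (i, j, k) \<Rightarrow>
     sum_list (map (\<lambda>(k', x, y). if k' = k then tnm C (\<phi> x) y else 0) (dec i j)))"
definition rep_chk :: "'i \<times> 'i \<times> 'i \<Rightarrow> ('m \<Rightarrow> 'm) \<Rightarrow> 'm" where
  "rep_chk t \<psi> = (case t of (i, j, k) \<Rightarrow>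
     sum_list (map (\<lambda>(k', x, y). if k' = k then tnm C (\<psi> y) x else 0) (dec i j)))"

lemma rep_hat_hom: "lin_functional (cH t) \<phi> \<Longrightarrow> rep_hat t \<phi> \<in> hH t"
  unfolding rep_hat_def lin_functional_def
  by (cases t) (auto elim!: dec_memberE intro!: hom_sum_list scalar_hom)
lemma rep_chk_hom: "lin_functional (hH t) \<psi> \<Longrightarrow> rep_chk t \<psi> \<in> cH t"
  unfolding rep_chk_def lin_functional_def
  by (cases t) (auto elim!: dec_memberE intro!: hom_sum_list scalar_hom)

lemma rep_hat_represents:
  assumes L: "lin_functional (cH t) \<phi>" and w: "w \<in> cH t"
  shows "scal C (V (kk t)) (cmp C (rep_hat t \<phi>) w) = \<phi> w"
proof -
  obtain i j k where t: "t = (i, j, k)" by (cases t)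
  let ?f = "\<lambda>(k', x, y). if k' = k then tnm C (\<phi> x) y else 0"
  let ?g = "\<lambda>(k', x, y). if k' = k then tnm C (scal C (V k) (cmp C y w)) x else 0"
  have L: "lin_functional (hom C (V k) (tno C (V i) (V j))) \<phi>"
    and w: "w \<in> hom C (V k) (tno C (V i) (V j))" using L w t by simp_all
  have summand: "?f s \<in> hom C (tno C (V i) (V j)) (V k) \<and> ?g s \<in> hom C (V k) (tno C (V i) (V j))
      \<and> cmp C (?f s) w \<in> hom C (V k) (V k) \<and> scal C (V k) (cmp C (?f s) w) = \<phi> (?g s)"
    if mem: "s \<in> set (dec i j)" for s
  proof -
    obtain k' x y where s: "s = (k', x, y)" and x: "x \<in> hom C (V k') (tno C (V i) (V j))"
      and y: "y \<in> hom C (tno C (V i) (V j)) (V k')" using mem by (rule dec_memberE)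
    show ?thesis
    proof (cases "k' = k")
      case True
      have yw: "cmp C y w \<in> hom C (V k) (V k)" using w y True by blast
      have px: "\<phi> x \<in> ground C" using L x True unfolding lin_functional_def by simp
      have "scal C (V k) (cmp C (tnm C (\<phi> x) y) w) = cmp C (\<phi> x) (scal C (V k) (cmp C y w))"
        using cmp_scalar_left[OF px w] y True scal_smult[OF simple px yw] by simp
      moreover have "\<phi> (tnm C (scal C (V k) (cmp C y w)) x) = cmp C (scal C (V k) (cmp C y w)) (\<phi> x)"
        using L x True scal_endo(1)[OF simple yw] unfolding lin_functional_def by simp
      ultimately show ?thesis
        using s True ground_comm[OF px scal_endo(1)[OF simple yw]] yw px x y w scal_endo(1)[OF simple yw]
        by (auto intro: cmp_hom scalar_hom)
    qed (use s lin_functional_zero[OF L] w in \<open>simp add: cmp_0l\<close>)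
  qed
  have "scal C (V (kk t)) (cmp C (rep_hat t \<phi>) w) = scal C (V k) (sum_list (map (\<lambda>s. cmp C (?f s) w) (dec i j)))"
    unfolding rep_hat_def t using cmp_sum_list_left[OF w, of "dec i j" ?f "V k"] summand by simp
  also have "\<dots> = sum_list (map (\<lambda>s. scal C (V k) (cmp C (?f s) w)) (dec i j))"
    using scal_sum_list[OF simple, of "dec i j" "\<lambda>s. cmp C (?f s) w"] summand by simp
  also have "\<dots> = sum_list (map (\<lambda>s. \<phi> (?g s)) (dec i j))"
    using summand by (intro arg_cong[where f = sum_list] map_cong) simp_all
  also have "\<dots> = \<phi> (sum_list (map ?g (dec i j)))"
    using lin_functional_sum_list[OF L, of "dec i j" ?g] summand by simp
  also have "sum_list (map ?g (dec i j)) = w" using check_expand[OF w] by simp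
  finally show ?thesis .
qed

lemma rep_chk_represents:
  assumes L: "lin_functional (hH t) \<psi>" and h: "h \<in> hH t"
  shows "scal C (V (kk t)) (cmp C h (rep_chk t \<psi>)) = \<psi> h"
proof -
  obtain i j k where t: "t = (i, j, k)" by (cases t)
  let ?f = "\<lambda>(k', x, y). if k' = k then tnm C (\<psi> y) x else 0"
  let ?g = "\<lambda>(k', x, y). if k' = k then tnm C (scal C (V k) (cmp C h x)) y else 0"
  have L: "lin_functional (hom C (tno C (V i) (V j)) (V k)) \<psi>"
    and h: "h \<in> hom C (tno C (V i) (V j)) (V k)" using L h t by simp_all
  have summand: "?f s \<in> hom C (V k) (tno C (V i) (V j)) \<and> ?g s \<in> hom C (tno C (V i) (V j)) (V k)
      \<and> cmp C h (?f s) \<in> hom C (V k) (V k) \<and> scal C (V k) (cmp C h (?f s)) = \<psi> (?g s)"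
    if mem: "s \<in> set (dec i j)" for s
  proof -
    obtain k' x y where s: "s = (k', x, y)" and x: "x \<in> hom C (V k') (tno C (V i) (V j))"
      and y: "y \<in> hom C (tno C (V i) (V j)) (V k')" using mem by (rule dec_memberE)
    show ?thesis
    proof (cases "k' = k")
      case True
      have hx: "cmp C h x \<in> hom C (V k) (V k)" using h x True by blast
      have py: "\<psi> y \<in> ground C" using L y True unfolding lin_functional_def by simp
      have "scal C (V k) (cmp C h (tnm C (\<psi> y) x)) = cmp C (\<psi> y) (scal C (V k) (cmp C h x))"
        using cmp_scalar_right[OF py _ h] x True scal_smult[OF simple py hx] by simp
      moreover have "\<psi> (tnm C (scal C (V k) (cmp C h x)) y) = cmp C (scal C (V k) (cmp C h x)) (\<psi> y)"
        using L y True scal_endo(1)[OF simple hx] unfolding lin_functional_def by simp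
      ultimately show ?thesis
        using s True ground_comm[OF py scal_endo(1)[OF simple hx]] hx py x y h scal_endo(1)[OF simple hx]
        by (auto intro: cmp_hom scalar_hom)
    qed (use s lin_functional_zero[OF L] h in \<open>simp add: cmp_0r\<close>)
  qed
  have "scal C (V (kk t)) (cmp C h (rep_chk t \<psi>)) = scal C (V k) (sum_list (map (\<lambda>s. cmp C h (?f s)) (dec i j)))"
    unfolding rep_chk_def t using cmp_sum_list_right[OF _ h, of "dec i j" ?f "V k"] summand by simp
  also have "\<dots> = sum_list (map (\<lambda>s. scal C (V k) (cmp C h (?f s))) (dec i j))"
    using scal_sum_list[OF simple, of "dec i j" "\<lambda>s. cmp C h (?f s)"] summand by simp
  also have "\<dots> = sum_list (map (\<lambda>s. \<psi> (?g s)) (dec i j))"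
    using summand by (intro arg_cong[where f = sum_list] map_cong) simp_all
  also have "\<dots> = \<psi> (sum_list (map ?g (dec i j)))"
    using lin_functional_sum_list[OF L, of "dec i j" ?g] summand by simp
  also have "sum_list (map ?g (dec i j)) = h" using hat_expand[OF h] by simp
  finally show ?thesis .
qed

definition supp :: "('i, 'm) hsp \<Rightarrow> ('i \<times> 'i \<times> 'i) set" where
  "supp x = {t. fst x t \<noteq> 0} \<union> {t. snd x t \<noteq> 0}"

lemma Hspace_iff: "x \<in> Hspace C V \<longleftrightarrow> (\<forall>t. fst x t \<in> hH t \<and> snd x t \<in> cH t) \<and> finite (supp x)"
  unfolding Hspace_def supp_def hH_def cH_def by auto

lemma HspaceD: "x \<in> Hspace C V \<Longrightarrow> fst x t \<in> hH t" "x \<in> Hspace C V \<Longrightarrow> snd x t \<in> cH t"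
  "x \<in> Hspace C V \<Longrightarrow> finite (supp x)"
  unfolding Hspace_iff by blast+

lemma Hspace_cmp_zero: "u \<in> Hspace C V \<Longrightarrow> cmp C (fst u s) 0 = 0" "u \<in> Hspace C V \<Longrightarrow> cmp C 0 (snd u s) = 0"
  by (simp_all add: hat_cmp_zero[OF HspaceD(1)] zero_cmp_check[OF HspaceD(2)])

lemma Hspace_add: "x \<in> Hspace C V \<Longrightarrow> y \<in> Hspace C V \<Longrightarrow> x + y \<in> Hspace C V"
proof -
  assume x: "x \<in> Hspace C V" and y: "y \<in> Hspace C V"
  have "supp (x + y) \<subseteq> supp x \<union> supp y" unfolding supp_def by auto
  then have "finite (supp (x + y))" using HspaceD(3)[OF x] HspaceD(3)[OF y] finite_subset by blast
  moreover have "fst (x + y) t \<in> hH t \<and> snd (x + y) t \<in> cH t" for t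
    using HspaceD(1,2)[OF x, of t] HspaceD(1,2)[OF y, of t] by (cases t) auto
  ultimately show ?thesis unfolding Hspace_iff by blast
qed

lemma Hspace_smult: "c \<in> ground C \<Longrightarrow> y \<in> Hspace C V \<Longrightarrow> hsmul C c y \<in> Hspace C V"
proof -
  assume c: "c \<in> ground C" and y: "y \<in> Hspace C V"
  have hom: "fst (hsmul C c y) t \<in> hH t \<and> snd (hsmul C c y) t \<in> cH t" for t
    using HspaceD(1,2)[OF y, of t] c unfolding hsmul_def by (cases t) auto
  then have "supp (hsmul C c y) \<subseteq> supp y"
    unfolding supp_def hsmul_def by (auto simp: tnm_0r[OF c])
  then show ?thesis using HspaceD(3)[OF y] hom finite_subset unfolding Hspace_iff by blast
qed

definition pair_at :: "('i, 'm) hsp \<Rightarrow> ('i, 'm) hsp \<Rightarrow> 'i \<times> 'i \<times> 'i \<Rightarrow> 'm" where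
  "pair_at x y t = scal C (V (kk t)) (cmp C (fst x t) (snd y t))
     + scal C (V (kk t)) (cmp C (fst y t) (snd x t))"

lemma pair_at_ground: "x \<in> Hspace C V \<Longrightarrow> y \<in> Hspace C V \<Longrightarrow> pair_at x y t \<in> ground C"
  unfolding pair_at_def by (intro hom_add scal_endo(1)[OF simple] hat_check_endo HspaceD)

lemma pform_sum:
  assumes x: "x \<in> Hspace C V" and y: "y \<in> Hspace C V"
    and S: "finite S" "supp x \<union> supp y \<subseteq> S"
  shows "pform C V x y = (\<Sum>t\<in>S. pair_at x y t)"
proof -
  have e: "{t. fst x t \<noteq> 0 \<or> snd x t \<noteq> 0 \<or> fst y t \<noteq> 0 \<or> snd y t \<noteq> 0} = supp x \<union> supp y"
    unfolding supp_def by auto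
  have "pform C V x y = (\<Sum>t\<in>supp x \<union> supp y. pair_at x y t)"
    unfolding pform_def e pair_at_def kk_def by (intro sum.cong refl) (auto split: prod.splits)
  also have "\<dots> = (\<Sum>t\<in>S. pair_at x y t)"
    by (rule sum.mono_neutral_left[OF S])
      (auto simp: supp_def pair_at_def Hspace_cmp_zero[OF x] cmp_0r[OF hom0])
  finally show ?thesis .
qed

lemma pform_add_right:
  assumes x: "x \<in> Hspace C V" and y: "y \<in> Hspace C V" and y': "y' \<in> Hspace C V"
  shows "pform C V x (y + y') = pform C V x y + pform C V x y'"
proof -
  define S where "S = supp x \<union> supp y \<union> supp y'"
  have S: "finite S" using HspaceD(3)[OF x] HspaceD(3)[OF y] HspaceD(3)[OF y'] by (simp add: S_def)
  have "supp (y + y') \<subseteq> supp y \<union> supp y'" unfolding supp_def by auto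
  then have "pform C V x (y + y') = (\<Sum>t\<in>S. pair_at x (y + y') t)"
    by (intro pform_sum[OF x Hspace_add[OF y y'] S]) (auto simp: S_def)
  also have "\<dots> = (\<Sum>t\<in>S. pair_at x y t + pair_at x y' t)"
  proof (rule sum.cong[OF refl])
    fix t :: "'i \<times> 'i \<times> 'i"
    note e = hat_check_endo[OF HspaceD(1)[OF x] HspaceD(2)[OF y]] hat_check_endo[OF HspaceD(1)[OF x] HspaceD(2)[OF y']]
      hat_check_endo[OF HspaceD(1)[OF y] HspaceD(2)[OF x]] hat_check_endo[OF HspaceD(1)[OF y'] HspaceD(2)[OF x]]
    obtain i j k where t: "t = (i, j, k)" by (cases t)
    have "cmp C (fst x t) (snd y t + snd y' t) = cmp C (fst x t) (snd y t) + cmp C (fst x t) (snd y' t)"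
      "cmp C (fst y t + fst y' t) (snd x t) = cmp C (fst y t) (snd x t) + cmp C (fst y' t) (snd x t)"
      using HspaceD(1,2)[OF x, of t] HspaceD(1,2)[OF y, of t] HspaceD(1,2)[OF y', of t] t
      by (auto intro: cmp_addr cmp_addl)
    then show "pair_at x (y + y') t = pair_at x y t + pair_at x y' t"
      unfolding pair_at_def using e by (simp add: scal_add algebra_simps)
  qed
  also have "\<dots> = (\<Sum>t\<in>S. pair_at x y t) + (\<Sum>t\<in>S. pair_at x y' t)"
    by (rule sum.distrib)
  also have "\<dots> = pform C V x y + pform C V x y'"
  proof -
    have "supp x \<union> supp y \<subseteq> S" "supp x \<union> supp y' \<subseteq> S" by (auto simp: S_def)
    then show ?thesis using pform_sum[OF x y S(1)] pform_sum[OF x y' S(1)] by simp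
  qed
  finally show ?thesis .
qed

lemma pform_smult_right:
  assumes c: "c \<in> ground C" and x: "x \<in> Hspace C V" and y: "y \<in> Hspace C V"
  shows "pform C V x (hsmul C c y) = cmp C c (pform C V x y)"
proof -
  define S where "S = supp x \<union> supp y"
  have S: "finite S" using HspaceD(3)[OF x] HspaceD(3)[OF y] by (simp add: S_def)
  have "supp (hsmul C c y) \<subseteq> supp y"
    using HspaceD(1,2)[OF y] unfolding supp_def hsmul_def by (auto simp: tnm_0r[OF c])
  then have "pform C V x (hsmul C c y) = (\<Sum>t\<in>S. pair_at x (hsmul C c y) t)"
    by (intro pform_sum[OF x Hspace_smult[OF c y] S]) (auto simp: S_def)
  also have "\<dots> = (\<Sum>t\<in>S. cmp C c (pair_at x y t))"
  proof (rule sum.cong[OF refl])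
    fix t :: "'i \<times> 'i \<times> 'i"
    note e = hat_check_endo[OF HspaceD(1)[OF x] HspaceD(2)[OF y]] hat_check_endo[OF HspaceD(1)[OF y] HspaceD(2)[OF x]]
    obtain i j k where t: "t = (i, j, k)" by (cases t)
    have "cmp C (fst x t) (tnm C c (snd y t)) = tnm C c (cmp C (fst x t) (snd y t))"
      "cmp C (tnm C c (fst y t)) (snd x t) = tnm C c (cmp C (fst y t) (snd x t))"
      using HspaceD(1,2)[OF x, of t] HspaceD(1,2)[OF y, of t] t c
      by (auto intro: cmp_scalar_right cmp_scalar_left)
    moreover have "cmp C c (a + b) = cmp C c a + cmp C c b" if "a \<in> ground C" "b \<in> ground C" for a b
      using that c by (rule cmp_addr)
    ultimately show "pair_at x (hsmul C c y) t = cmp C c (pair_at x y t)"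
      unfolding pair_at_def hsmul_def using e c by (simp add: scal_smult scal_endo(1))
  qed
  also have "\<dots> = cmp C c (\<Sum>t\<in>S. pair_at x y t)"
    by (rule cmp_sum_right[symmetric, OF pair_at_ground[OF x y] c])
  also have "\<dots> = cmp C c (pform C V x y)"
    using pform_sum[OF x y S] by (simp add: S_def)
  finally show ?thesis .
qed

lemma inj_hat_Hspace: "h \<in> hH t \<Longrightarrow> inj_hat t h \<in> Hspace C V"
  unfolding Hspace_iff inj_hat_def supp_def
  by (auto simp: hH_def cH_def split: prod.splits intro: finite_subset[of _ "{t}"])
lemma inj_chk_Hspace: "w \<in> cH t \<Longrightarrow> inj_chk t w \<in> Hspace C V"
  unfolding Hspace_iff inj_chk_def supp_def
  by (auto simp: hH_def cH_def split: prod.splits intro: finite_subset[of _ "{t}"])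

lemma pform_inj_hat:
  assumes h: "h \<in> hH t" and u: "u \<in> Hspace C V"
  shows "pform C V (inj_hat t h) u = scal C (V (kk t)) (cmp C h (snd u t))"
proof -
  have S: "finite (insert t (supp u))" using HspaceD(3)[OF u] by simp
  have "supp (inj_hat t h) \<subseteq> {t}" unfolding supp_def inj_hat_def by auto
  then have "pform C V (inj_hat t h) u = (\<Sum>s\<in>insert t (supp u). pair_at (inj_hat t h) u s)"
    by (intro pform_sum[OF inj_hat_Hspace[OF h] u S]) auto
  also have "\<dots> = pair_at (inj_hat t h) u t"
    by (rule sum.mono_neutral_right[OF S, of "{t}", simplified])
      (use Hspace_cmp_zero[OF u] in \<open>auto simp: pair_at_def inj_hat_def\<close>)
  finally show ?thesis using Hspace_cmp_zero[OF u] unfolding pair_at_def inj_hat_def by simp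
qed

lemma pform_inj_chk:
  assumes w: "w \<in> cH t" and u: "u \<in> Hspace C V"
  shows "pform C V (inj_chk t w) u = scal C (V (kk t)) (cmp C (fst u t) w)"
proof -
  have S: "finite (insert t (supp u))" using HspaceD(3)[OF u] by simp
  have "supp (inj_chk t w) \<subseteq> {t}" unfolding supp_def inj_chk_def by auto
  then have "pform C V (inj_chk t w) u = (\<Sum>s\<in>insert t (supp u). pair_at (inj_chk t w) u s)"
    by (intro pform_sum[OF inj_chk_Hspace[OF w] u S]) auto
  also have "\<dots> = pair_at (inj_chk t w) u t"
    by (rule sum.mono_neutral_right[OF S, of "{t}", simplified])
      (use Hspace_cmp_zero[OF u] in \<open>auto simp: pair_at_def inj_chk_def\<close>)
  finally show ?thesis using Hspace_cmp_zero[OF u] unfolding pair_at_def inj_chk_def by simp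
qed

lemma pform_nondegenerate:
  assumes u: "u \<in> Hspace C V" and v: "v \<in> Hspace C V"
    and eq: "\<And>z. z \<in> Hspace C V \<Longrightarrow> pform C V z u = pform C V z v"
  shows "u = v"
proof -
  have "snd u t = snd v t" for t
    by (rule check_determined[OF HspaceD(2)[OF u] HspaceD(2)[OF v]])
      (use eq[OF inj_hat_Hspace] pform_inj_hat u v in auto)
  moreover have "fst u t = fst v t" for t
    by (rule hat_determined[OF HspaceD(1)[OF u] HspaceD(1)[OF v]])
      (use eq[OF inj_chk_Hspace] pform_inj_chk u v in auto)
  ultimately show ?thesis by (simp add: prod_eq_iff fun_eq_iff)
qed


section \<open>Operators that permute the indices\<close>

text \<open>A and B send the component at index t to index tA t resp. tB t, exchanging hat and check
  parts; both index maps are involutions.\<close>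

definition tA :: "'i \<times> 'i \<times> 'i \<Rightarrow> 'i \<times> 'i \<times> 'i" where
  "tA t = (case t of (i, j, k) \<Rightarrow> (st i, k, j))"
definition tB :: "'i \<times> 'i \<times> 'i \<Rightarrow> 'i \<times> 'i \<times> 'i" where
  "tB t = (case t of (i, j, k) \<Rightarrow> (k, st j, i))"

lemma tA_simp [simp]: "tA (i, j, k) = (st i, k, j)" by (simp add: tA_def)
lemma tB_simp [simp]: "tB (i, j, k) = (k, st j, i)" by (simp add: tB_def)
lemma tA_tA [simp]: "tA (tA t) = t" by (cases t) simp
lemma tB_tB [simp]: "tB (tB t) = t" by (cases t) simp

definition opg :: "('i \<times> 'i \<times> 'i \<Rightarrow> 'i \<times> 'i \<times> 'i) \<Rightarrow> ('i \<times> 'i \<times> 'i \<Rightarrow> 'm \<Rightarrow> 'm)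
    \<Rightarrow> ('i \<times> 'i \<times> 'i \<Rightarrow> 'm \<Rightarrow> 'm) \<Rightarrow> ('i, 'm) hsp \<Rightarrow> ('i, 'm) hsp" where
  "opg \<tau> F G x = (\<Sum>t\<in>{t. fst x t \<noteq> 0}. inj_chk (\<tau> t) (F t (fst x t)))
     + (\<Sum>t\<in>{t. snd x t \<noteq> 0}. inj_hat (\<tau> t) (G t (snd x t)))"

definition AH :: "'i \<times> 'i \<times> 'i \<Rightarrow> 'm \<Rightarrow> 'm" where "AH t = (case t of (i, j, k) \<Rightarrow> Ah i j)"
definition AC :: "'i \<times> 'i \<times> 'i \<Rightarrow> 'm \<Rightarrow> 'm" where "AC t = (case t of (i, j, k) \<Rightarrow> Ac i j)"
definition BH :: "'i \<times> 'i \<times> 'i \<Rightarrow> 'm \<Rightarrow> 'm" where "BH t = (case t of (i, j, k) \<Rightarrow> Bh i j)"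
definition BC :: "'i \<times> 'i \<times> 'i \<Rightarrow> 'm \<Rightarrow> 'm" where "BC t = (case t of (i, j, k) \<Rightarrow> Bc i j)"

lemma AH_simp [simp]: "AH (i, j, k) = Ah i j" by (simp add: AH_def)
lemma AC_simp [simp]: "AC (i, j, k) = Ac i j" by (simp add: AC_def)
lemma BH_simp [simp]: "BH (i, j, k) = Bh i j" by (simp add: BH_def)
lemma BC_simp [simp]: "BC (i, j, k) = Bc i j" by (simp add: BC_def)

lemma opA_eq: "opA C V st bb dd = opg tA AH AC"
  unfolding opA_def opg_def
  by (intro ext arg_cong2[where f = "(+)"] sum.cong refl) (auto simp: Ah_def Ac_def split: prod.splits)
lemma opB_eq: "opB C V st bb dd = opg tB BH BC"
  unfolding opB_def opg_def
  by (intro ext arg_cong2[where f = "(+)"] sum.cong refl) (auto simp: Bh_def Bc_def split: prod.splits)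

lemma AH_hom: "h \<in> hH t \<Longrightarrow> AH t h \<in> cH (tA t)" by (cases t) auto
lemma AC_hom: "w \<in> cH t \<Longrightarrow> AC t w \<in> hH (tA t)" by (cases t) auto
lemma BH_hom: "h \<in> hH t \<Longrightarrow> BH t h \<in> cH (tB t)" by (cases t) auto
lemma BC_hom: "w \<in> cH t \<Longrightarrow> BC t w \<in> hH (tB t)" by (cases t) auto
lemma components_zero: "AH t 0 = 0" "AC t 0 = 0" "BH t 0 = 0" "BC t 0 = 0"
  by (cases t; simp)+
lemma AH_add: "a \<in> hH t \<Longrightarrow> b \<in> hH t \<Longrightarrow> AH t (a + b) = AH t a + AH t b"
  by (cases t) (auto intro: Ah_linear(1)[OF _ _ idm_hom])
lemma AC_add: "a \<in> cH t \<Longrightarrow> b \<in> cH t \<Longrightarrow> AC t (a + b) = AC t a + AC t b"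
  by (cases t) (auto intro: Ac_linear(1)[OF _ _ idm_hom])
lemma BH_add: "a \<in> hH t \<Longrightarrow> b \<in> hH t \<Longrightarrow> BH t (a + b) = BH t a + BH t b"
  by (cases t) (auto intro: Bh_linear(1)[OF _ _ idm_hom])
lemma BC_add: "a \<in> cH t \<Longrightarrow> b \<in> cH t \<Longrightarrow> BC t (a + b) = BC t a + BC t b"
  by (cases t) (auto intro: Bc_linear(1)[OF _ _ idm_hom])
lemma AH_smult: "c \<in> ground C \<Longrightarrow> a \<in> hH t \<Longrightarrow> AH t (tnm C c a) = tnm C c (AH t a)"
  by (cases t) (auto intro: Ah_linear(2)[OF _ hom0])
lemma AC_smult: "c \<in> ground C \<Longrightarrow> a \<in> cH t \<Longrightarrow> AC t (tnm C c a) = tnm C c (AC t a)"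
  by (cases t) (auto intro: Ac_linear(2)[OF _ hom0])
lemma BH_smult: "c \<in> ground C \<Longrightarrow> a \<in> hH t \<Longrightarrow> BH t (tnm C c a) = tnm C c (BH t a)"
  by (cases t) (auto intro: Bh_linear(2)[OF _ hom0])
lemma BC_smult: "c \<in> ground C \<Longrightarrow> a \<in> cH t \<Longrightarrow> BC t (tnm C c a) = tnm C c (BC t a)"
  by (cases t) (auto intro: Bc_linear(2)[OF _ hom0])

lemma sum_fun_apply: "(\<Sum>t\<in>S. f t) u = (\<Sum>t\<in>S. f t u)"
  by (induction S rule: infinite_finite_induct) auto

context
  fixes \<tau> :: "'i \<times> 'i \<times> 'i \<Rightarrow> 'i \<times> 'i \<times> 'i" and F G :: "'i \<times> 'i \<times> 'i \<Rightarrow> 'm \<Rightarrow> 'm"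
  assumes invol: "\<And>t. \<tau> (\<tau> t) = t"
    and F_zero: "\<And>t. F t 0 = 0" and G_zero: "\<And>t. G t 0 = 0"
    and F_hom: "\<And>t h. h \<in> hH t \<Longrightarrow> F t h \<in> cH (\<tau> t)"
    and G_hom: "\<And>t w. w \<in> cH t \<Longrightarrow> G t w \<in> hH (\<tau> t)"
begin

lemma opg_components:
  assumes x: "x \<in> Hspace C V"
  shows "fst (opg \<tau> F G x) u = G (\<tau> u) (snd x (\<tau> u))" "snd (opg \<tau> F G x) u = F (\<tau> u) (fst x (\<tau> u))"
proof -
  have fin: "finite {t. fst x t \<noteq> 0}" "finite {t. snd x t \<noteq> 0}"
    using HspaceD(3)[OF x] unfolding supp_def by auto
  have e: "(u = \<tau> t) = (t = \<tau> u)" for t using invol by metis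
  have "fst (opg \<tau> F G x) u = (\<Sum>t\<in>{t. snd x t \<noteq> 0}. (if t = \<tau> u then G t (snd x t) else 0))"
    unfolding opg_def by (simp add: fst_sum sum_fun_apply inj_chk_def inj_hat_def e)
  also have "\<dots> = G (\<tau> u) (snd x (\<tau> u))" using G_zero by (auto simp: sum.delta[OF fin(2)])
  finally show "fst (opg \<tau> F G x) u = G (\<tau> u) (snd x (\<tau> u))" .
  have "snd (opg \<tau> F G x) u = (\<Sum>t\<in>{t. fst x t \<noteq> 0}. (if t = \<tau> u then F t (fst x t) else 0))"
    unfolding opg_def by (simp add: snd_sum sum_fun_apply inj_chk_def inj_hat_def e)
  also have "\<dots> = F (\<tau> u) (fst x (\<tau> u))" using F_zero by (auto simp: sum.delta[OF fin(1)])
  finally show "snd (opg \<tau> F G x) u = F (\<tau> u) (fst x (\<tau> u))" .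
qed

lemma opg_Hspace:
  assumes x: "x \<in> Hspace C V"
  shows "opg \<tau> F G x \<in> Hspace C V" "supp (opg \<tau> F G x) \<subseteq> \<tau> ` supp x"
proof -
  note c = opg_components[OF x]
  show sp: "supp (opg \<tau> F G x) \<subseteq> \<tau> ` supp x"
  proof
    fix u assume "u \<in> supp (opg \<tau> F G x)"
    then have "\<tau> u \<in> supp x" unfolding supp_def c by (auto simp: F_zero G_zero)
    then show "u \<in> \<tau> ` supp x" using invol by (metis image_eqI)
  qed
  have "fst (opg \<tau> F G x) u \<in> hH u \<and> snd (opg \<tau> F G x) u \<in> cH u" for u
    unfolding c using G_hom[OF HspaceD(2)[OF x]] F_hom[OF HspaceD(1)[OF x]] invol by metis
  moreover have "finite (supp (opg \<tau> F G x))" using finite_subset[OF sp] HspaceD(3)[OF x] by blast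
  ultimately show "opg \<tau> F G x \<in> Hspace C V" unfolding Hspace_iff by blast
qed

end

lemma opA_Hspace: "x \<in> Hspace C V \<Longrightarrow> opA C V st bb dd x \<in> Hspace C V"
  unfolding opA_eq by (rule opg_Hspace(1)) (auto intro: components_zero AH_hom AC_hom)
lemma opB_Hspace: "x \<in> Hspace C V \<Longrightarrow> opB C V st bb dd x \<in> Hspace C V"
  unfolding opB_eq by (rule opg_Hspace(1)) (auto intro: components_zero BH_hom BC_hom)
lemma opA_components: "x \<in> Hspace C V \<Longrightarrow> fst (opA C V st bb dd x) u = AC (tA u) (snd x (tA u))"
  "x \<in> Hspace C V \<Longrightarrow> snd (opA C V st bb dd x) u = AH (tA u) (fst x (tA u))"
  unfolding opA_eq by (rule opg_components; simp add: components_zero AH_hom AC_hom)+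
lemma opB_components: "x \<in> Hspace C V \<Longrightarrow> fst (opB C V st bb dd x) u = BC (tB u) (snd x (tB u))"
  "x \<in> Hspace C V \<Longrightarrow> snd (opB C V st bb dd x) u = BH (tB u) (fst x (tB u))"
  unfolding opB_eq by (rule opg_components; simp add: components_zero BH_hom BC_hom)+


section \<open>Transposes of index-permuting operators\<close>

lemma rep_hat_zero:
  assumes "\<And>w. w \<in> cH t \<Longrightarrow> \<phi> w = 0"
  shows "rep_hat t \<phi> = 0"
proof -
  obtain i j k where t: "t = (i, j, k)" by (cases t)
  have "rep_hat t \<phi> = sum_list (map (\<lambda>_. 0) (dec i j))"
    unfolding rep_hat_def t case_prod_conv
    by (intro arg_cong[where f = sum_list] map_cong refl)
      (auto elim!: dec_memberE simp: assms[unfolded t, simplified] tnm_0l)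
  then show ?thesis by simp
qed

lemma rep_chk_zero:
  assumes "\<And>h. h \<in> hH t \<Longrightarrow> \<psi> h = 0"
  shows "rep_chk t \<psi> = 0"
proof -
  obtain i j k where t: "t = (i, j, k)" by (cases t)
  have "rep_chk t \<psi> = sum_list (map (\<lambda>_. 0) (dec i j))"
    unfolding rep_chk_def t case_prod_conv
    by (intro arg_cong[where f = sum_list] map_cong refl)
      (auto elim!: dec_memberE simp: assms[unfolded t, simplified] tnm_0l)
  then show ?thesis by simp
qed

text \<open>The candidate transpose of opg: at the index t it represents the functionals obtained
  by pairing the image of a component at t with y at \<tau> t.\<close>

definition chk_functional :: "('i \<times> 'i \<times> 'i \<Rightarrow> 'i \<times> 'i \<times> 'i) \<Rightarrow> ('i \<times> 'i \<times> 'i \<Rightarrow> 'm \<Rightarrow> 'm)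
    \<Rightarrow> ('i, 'm) hsp \<Rightarrow> 'i \<times> 'i \<times> 'i \<Rightarrow> 'm \<Rightarrow> 'm" where
  "chk_functional \<tau> G y t w = scal C (V (kk (\<tau> t))) (cmp C (G t w) (snd y (\<tau> t)))"
definition hat_functional :: "('i \<times> 'i \<times> 'i \<Rightarrow> 'i \<times> 'i \<times> 'i) \<Rightarrow> ('i \<times> 'i \<times> 'i \<Rightarrow> 'm \<Rightarrow> 'm)
    \<Rightarrow> ('i, 'm) hsp \<Rightarrow> 'i \<times> 'i \<times> 'i \<Rightarrow> 'm \<Rightarrow> 'm" where
  "hat_functional \<tau> F y t h = scal C (V (kk (\<tau> t))) (cmp C (fst y (\<tau> t)) (F t h))"

definition transpose_op :: "('i \<times> 'i \<times> 'i \<Rightarrow> 'i \<times> 'i \<times> 'i) \<Rightarrow> ('i \<times> 'i \<times> 'i \<Rightarrow> 'm \<Rightarrow> 'm)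
    \<Rightarrow> ('i \<times> 'i \<times> 'i \<Rightarrow> 'm \<Rightarrow> 'm) \<Rightarrow> ('i, 'm) hsp \<Rightarrow> ('i, 'm) hsp" where
  "transpose_op \<tau> F G y = ((\<lambda>t. rep_hat t (chk_functional \<tau> G y t)), (\<lambda>t. rep_chk t (hat_functional \<tau> F y t)))"

context
  fixes \<tau> :: "'i \<times> 'i \<times> 'i \<Rightarrow> 'i \<times> 'i \<times> 'i" and F G :: "'i \<times> 'i \<times> 'i \<Rightarrow> 'm \<Rightarrow> 'm"
  assumes invol: "\<And>t. \<tau> (\<tau> t) = t"
    and F_zero: "\<And>t. F t 0 = 0" and G_zero: "\<And>t. G t 0 = 0"
    and F_hom: "\<And>t h. h \<in> hH t \<Longrightarrow> F t h \<in> cH (\<tau> t)"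
    and G_hom: "\<And>t w. w \<in> cH t \<Longrightarrow> G t w \<in> hH (\<tau> t)"
    and F_add: "\<And>t a b. a \<in> hH t \<Longrightarrow> b \<in> hH t \<Longrightarrow> F t (a + b) = F t a + F t b"
    and F_smult: "\<And>t c a. c \<in> ground C \<Longrightarrow> a \<in> hH t \<Longrightarrow> F t (tnm C c a) = tnm C c (F t a)"
    and G_add: "\<And>t a b. a \<in> cH t \<Longrightarrow> b \<in> cH t \<Longrightarrow> G t (a + b) = G t a + G t b"
    and G_smult: "\<And>t c a. c \<in> ground C \<Longrightarrow> a \<in> cH t \<Longrightarrow> G t (tnm C c a) = tnm C c (G t a)"
begin

lemma chk_functional_linear:
  assumes y: "y \<in> Hspace C V"
  shows "lin_functional (cH t) (chk_functional \<tau> G y t)"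
proof -
  note endo = hat_check_endo[OF G_hom HspaceD(2)[OF y]]
  show ?thesis
    unfolding lin_functional_def chk_functional_def
  proof (intro conjI ballI)
    fix a assume "a \<in> cH t"
    then show "scal C (V (kk (\<tau> t))) (cmp C (G t a) (snd y (\<tau> t))) \<in> ground C"
      by (intro scal_endo(1)[OF simple] endo)
  next
    fix a b assume a: "a \<in> cH t" and b: "b \<in> cH t"
    have "cmp C (G t (a + b)) (snd y (\<tau> t)) = cmp C (G t a) (snd y (\<tau> t)) + cmp C (G t b) (snd y (\<tau> t))"
      unfolding G_add[OF a b] using G_hom[OF a] G_hom[OF b] HspaceD(2)[OF y, of "\<tau> t"]
      by (cases "\<tau> t") (auto intro: cmp_addl)
    then show "scal C (V (kk (\<tau> t))) (cmp C (G t (a + b)) (snd y (\<tau> t)))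
        = scal C (V (kk (\<tau> t))) (cmp C (G t a) (snd y (\<tau> t))) + scal C (V (kk (\<tau> t))) (cmp C (G t b) (snd y (\<tau> t)))"
      using scal_add[OF simple endo[OF a] endo[OF b]] by simp
  next
    fix c a assume c: "c \<in> ground C" and a: "a \<in> cH t"
    have "cmp C (G t (tnm C c a)) (snd y (\<tau> t)) = tnm C c (cmp C (G t a) (snd y (\<tau> t)))"
      unfolding G_smult[OF c a] using G_hom[OF a] HspaceD(2)[OF y, of "\<tau> t"] c
      by (cases "\<tau> t") (auto intro: cmp_scalar_left)
    then show "scal C (V (kk (\<tau> t))) (cmp C (G t (tnm C c a)) (snd y (\<tau> t)))
        = cmp C c (scal C (V (kk (\<tau> t))) (cmp C (G t a) (snd y (\<tau> t))))"
      using scal_smult[OF simple c endo[OF a]] by simp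
  qed
qed

lemma hat_functional_linear:
  assumes y: "y \<in> Hspace C V"
  shows "lin_functional (hH t) (hat_functional \<tau> F y t)"
proof -
  note endo = hat_check_endo[OF HspaceD(1)[OF y] F_hom]
  show ?thesis
    unfolding lin_functional_def hat_functional_def
  proof (intro conjI ballI)
    fix a assume "a \<in> hH t"
    then show "scal C (V (kk (\<tau> t))) (cmp C (fst y (\<tau> t)) (F t a)) \<in> ground C"
      by (intro scal_endo(1)[OF simple] endo)
  next
    fix a b assume a: "a \<in> hH t" and b: "b \<in> hH t"
    have "cmp C (fst y (\<tau> t)) (F t (a + b)) = cmp C (fst y (\<tau> t)) (F t a) + cmp C (fst y (\<tau> t)) (F t b)"
      unfolding F_add[OF a b] using F_hom[OF a] F_hom[OF b] HspaceD(1)[OF y, of "\<tau> t"]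
      by (cases "\<tau> t") (auto intro: cmp_addr)
    then show "scal C (V (kk (\<tau> t))) (cmp C (fst y (\<tau> t)) (F t (a + b)))
        = scal C (V (kk (\<tau> t))) (cmp C (fst y (\<tau> t)) (F t a)) + scal C (V (kk (\<tau> t))) (cmp C (fst y (\<tau> t)) (F t b))"
      using scal_add[OF simple endo[OF a] endo[OF b]] by simp
  next
    fix c a assume c: "c \<in> ground C" and a: "a \<in> hH t"
    have "cmp C (fst y (\<tau> t)) (F t (tnm C c a)) = tnm C c (cmp C (fst y (\<tau> t)) (F t a))"
      unfolding F_smult[OF c a] using F_hom[OF a] HspaceD(1)[OF y, of "\<tau> t"] c
      by (cases "\<tau> t") (auto intro: cmp_scalar_right)
    then show "scal C (V (kk (\<tau> t))) (cmp C (fst y (\<tau> t)) (F t (tnm C c a)))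
        = cmp C c (scal C (V (kk (\<tau> t))) (cmp C (fst y (\<tau> t)) (F t a)))"
      using scal_smult[OF simple c endo[OF a]] by simp
  qed
qed

lemma transpose_op_Hspace:
  assumes y: "y \<in> Hspace C V"
  shows "transpose_op \<tau> F G y \<in> Hspace C V" "supp (transpose_op \<tau> F G y) \<subseteq> \<tau> ` supp y"
proof -
  show sp: "supp (transpose_op \<tau> F G y) \<subseteq> \<tau> ` supp y"
  proof
    fix t assume t: "t \<in> supp (transpose_op \<tau> F G y)"
    have "\<tau> t \<in> supp y"
    proof (rule ccontr)
      assume "\<tau> t \<notin> supp y"
      then have z: "fst y (\<tau> t) = 0" "snd y (\<tau> t) = 0" unfolding supp_def by auto
      have "rep_hat t (chk_functional \<tau> G y t) = 0"
        by (rule rep_hat_zero) (simp add: chk_functional_def z hat_cmp_zero[OF G_hom])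
      moreover have "rep_chk t (hat_functional \<tau> F y t) = 0"
        by (rule rep_chk_zero) (simp add: hat_functional_def z zero_cmp_check[OF F_hom])
      ultimately show False using t unfolding supp_def transpose_op_def by simp
    qed
    then show "t \<in> \<tau> ` supp y" using invol by (metis image_eqI)
  qed
  have "fst (transpose_op \<tau> F G y) t \<in> hH t \<and> snd (transpose_op \<tau> F G y) t \<in> cH t" for t
    unfolding transpose_op_def
    using rep_hat_hom[OF chk_functional_linear[OF y]] rep_chk_hom[OF hat_functional_linear[OF y]] by simp
  moreover have "finite (supp (transpose_op \<tau> F G y))" using finite_subset[OF sp] HspaceD(3)[OF y] by blast
  ultimately show "transpose_op \<tau> F G y \<in> Hspace C V" using sp unfolding Hspace_iff by blast
qed

lemma transpose_op_adjoint:
  assumes x: "x \<in> Hspace C V" and y: "y \<in> Hspace C V"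
  shows "pform C V (opg \<tau> F G x) y = pform C V x (transpose_op \<tau> F G y)"
proof -
  define S where "S = supp x \<union> \<tau> ` supp x \<union> supp y \<union> \<tau> ` supp y"
  have fS: "finite S" using HspaceD(3)[OF x] HspaceD(3)[OF y] by (simp add: S_def)
  have "\<tau> ` \<tau> ` A = A" for A by (simp add: image_image invol)
  then have tS: "\<tau> ` S = S" unfolding S_def image_Un by (simp add: ac_simps)
  have inj: "inj_on \<tau> S" by (rule inj_on_inverseI[where g = \<tau>]) (rule invol)
  note opgH = opg_Hspace[where \<tau> = \<tau> and F = F and G = G, OF invol F_zero G_zero F_hom G_hom x]
  note comps = opg_components[where \<tau> = \<tau> and F = F and G = G, OF invol F_zero G_zero F_hom G_hom x]
  note T = transpose_op_Hspace[OF y]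
  have "pform C V (opg \<tau> F G x) y = (\<Sum>u\<in>S. pair_at (opg \<tau> F G x) y u)"
    by (rule pform_sum[OF opgH(1) y fS]) (use opgH(2) in \<open>auto simp: S_def\<close>)
  also have "\<dots> = (\<Sum>u\<in>\<tau> ` S. pair_at (opg \<tau> F G x) y u)" by (simp only: tS)
  also have "\<dots> = (\<Sum>t\<in>S. pair_at (opg \<tau> F G x) y (\<tau> t))"
    by (simp only: sum.reindex[OF inj] comp_def)
  also have "\<dots> = (\<Sum>t\<in>S. pair_at x (transpose_op \<tau> F G y) t)"
  proof (rule sum.cong[OF refl])
    fix t
    have "pair_at (opg \<tau> F G x) y (\<tau> t) = chk_functional \<tau> G y t (snd x t) + hat_functional \<tau> F y t (fst x t)"
      by (simp add: pair_at_def comps invol chk_functional_def hat_functional_def)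
    also have "\<dots> = pair_at x (transpose_op \<tau> F G y) t"
      unfolding pair_at_def transpose_op_def
      using rep_hat_represents[OF chk_functional_linear[OF y] HspaceD(2)[OF x]]
        rep_chk_represents[OF hat_functional_linear[OF y] HspaceD(1)[OF x]]
      by (simp add: add.commute)
    finally show "pair_at (opg \<tau> F G x) y (\<tau> t) = pair_at x (transpose_op \<tau> F G y) t" .
  qed
  also have "\<dots> = pform C V x (transpose_op \<tau> F G y)"
    by (rule pform_sum[symmetric, OF x T(1) fS]) (use T(2) in \<open>auto simp: S_def\<close>)
  finally show ?thesis .
qed

text \<open>Linearity of transpose_op follows from adjointness and nondegeneracy of the form.\<close>

lemma transpose_op_linear: "hlinear C V (transpose_op \<tau> F G)"
  unfolding hlinear_def
proof (intro conjI ballI)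
  fix y assume "y \<in> Hspace C V"
  then show "transpose_op \<tau> F G y \<in> Hspace C V" by (rule transpose_op_Hspace(1))
next
  fix y y' assume y: "y \<in> Hspace C V" and y': "y' \<in> Hspace C V"
  note T = transpose_op_Hspace(1)
  show "transpose_op \<tau> F G (y + y') = transpose_op \<tau> F G y + transpose_op \<tau> F G y'"
  proof (rule pform_nondegenerate)
    show "transpose_op \<tau> F G (y + y') \<in> Hspace C V" by (intro T Hspace_add y y')
    show "transpose_op \<tau> F G y + transpose_op \<tau> F G y' \<in> Hspace C V" by (intro Hspace_add T y y')
    fix z assume z: "z \<in> Hspace C V"
    note opgH = opg_Hspace(1)[where \<tau> = \<tau> and F = F and G = G, OF invol F_zero G_zero F_hom G_hom z]
    have "pform C V z (transpose_op \<tau> F G (y + y')) = pform C V (opg \<tau> F G z) (y + y')"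
      by (rule transpose_op_adjoint[symmetric, OF z Hspace_add[OF y y']])
    also have "\<dots> = pform C V (opg \<tau> F G z) y + pform C V (opg \<tau> F G z) y'"
      by (rule pform_add_right[OF opgH y y'])
    also have "\<dots> = pform C V z (transpose_op \<tau> F G y) + pform C V z (transpose_op \<tau> F G y')"
      by (simp add: transpose_op_adjoint z y y')
    also have "\<dots> = pform C V z (transpose_op \<tau> F G y + transpose_op \<tau> F G y')"
      by (rule pform_add_right[symmetric, OF z T[OF y] T[OF y']])
    finally show "pform C V z (transpose_op \<tau> F G (y + y')) = pform C V z (transpose_op \<tau> F G y + transpose_op \<tau> F G y')" .
  qed
next
  fix c y assume c: "c \<in> ground C" and y: "y \<in> Hspace C V"
  note T = transpose_op_Hspace(1)
  show "transpose_op \<tau> F G (hsmul C c y) = hsmul C c (transpose_op \<tau> F G y)"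
  proof (rule pform_nondegenerate)
    show "transpose_op \<tau> F G (hsmul C c y) \<in> Hspace C V" by (intro T Hspace_smult c y)
    show "hsmul C c (transpose_op \<tau> F G y) \<in> Hspace C V" by (intro Hspace_smult c T y)
    fix z assume z: "z \<in> Hspace C V"
    note opgH = opg_Hspace(1)[where \<tau> = \<tau> and F = F and G = G, OF invol F_zero G_zero F_hom G_hom z]
    have "pform C V z (transpose_op \<tau> F G (hsmul C c y)) = pform C V (opg \<tau> F G z) (hsmul C c y)"
      by (rule transpose_op_adjoint[symmetric, OF z Hspace_smult[OF c y]])
    also have "\<dots> = cmp C c (pform C V (opg \<tau> F G z) y)"
      by (rule pform_smult_right[OF c opgH y])
    also have "\<dots> = cmp C c (pform C V z (transpose_op \<tau> F G y))"
      by (simp add: transpose_op_adjoint z y)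
    also have "\<dots> = pform C V z (hsmul C c (transpose_op \<tau> F G y))"
      by (rule pform_smult_right[symmetric, OF c z T[OF y]])
    finally show "pform C V z (transpose_op \<tau> F G (hsmul C c y)) = pform C V z (hsmul C c (transpose_op \<tau> F G y))" .
  qed
qed

lemma opg_transpose: "is_transpose C V (opg \<tau> F G) (transpose_op \<tau> F G)"
  unfolding is_transpose_def using transpose_op_linear transpose_op_adjoint by blast

end

lemma A_transpose: "is_transpose C V (opA C V st bb dd) (transpose_op tA AH AC)"
  unfolding opA_eq
  by (rule opg_transpose) (auto intro: components_zero AH_hom AC_hom AH_add AC_add AH_smult AC_smult)
lemma B_transpose: "is_transpose C V (opB C V st bb dd) (transpose_op tB BH BC)"
  unfolding opB_eq
  by (rule opg_transpose) (auto intro: components_zero BH_hom BC_hom BH_add BC_add BH_smult BC_smult)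


section \<open>Closing cups and caps\<close>

definition cup_close_left :: "'i \<Rightarrow> 'o \<times> 'o \<times> 'm \<Rightarrow> 'o \<times> 'o \<times> 'm" where
  "cup_close_left c P = acomp C (atens C (aid C (V c)) (dd_arr (st c))) (atens C P (aid C (V c)))"
definition cup_close_right :: "'i \<Rightarrow> 'o \<times> 'o \<times> 'm \<Rightarrow> 'o \<times> 'o \<times> 'm" where
  "cup_close_right c P = acomp C (atens C (dd_arr (st c)) (aid C (V (st c)))) (atens C (aid C (V (st c))) P)"
definition cap_close_left :: "'i \<Rightarrow> 'o \<times> 'o \<times> 'm \<Rightarrow> 'o \<times> 'o \<times> 'm" where
  "cap_close_left c P = acomp C (atens C P (aid C (V c))) (atens C (aid C (V c)) (bb_arr (st c)))"
definition cap_close_right :: "'i \<Rightarrow> 'o \<times> 'o \<times> 'm \<Rightarrow> 'o \<times> 'o \<times> 'm" where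
  "cap_close_right c P = acomp C (atens C (aid C (V (st c))) P) (atens C (bb_arr (st c)) (aid C (V (st c))))"

lemma cup_from_left_closure:
  assumes wP: "arr C P" and fP [simp]: "fst P = I" "fst (snd P) = tno C (V c) (V (st c))"
  shows "acomp C (atens C (cup_close_left c P) (aid C (V (st c)))) (bb_arr c) = P"
proof -
  let ?cc' = "tno C (V c) (V (st c))"
  have e1: "atens C (cup_close_left c P) (aid C (V (st c)))
      = acomp C (atens C (aid C (V c)) (atens C (dd_arr (st c)) (aid C (V (st c))))) (atens C P (aid C ?cc'))"
    unfolding cup_close_left_def using wP by (subst atens_acomp_left) (simp_all add: atens_assoc atens_id)
  have e2: "acomp C (atens C P (aid C ?cc')) (bb_arr c) = acomp C (atens C (aid C ?cc') (bb_arr c)) P"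
  proof -
    have "acomp C (atens C P (aid C ?cc')) (bb_arr c) = acomp C (atens C P (aid C ?cc')) (atens C (aid C I) (bb_arr c))"
      by (simp add: atens_unitl)
    also have "\<dots> = atens C P (bb_arr c)" using wP by (subst ainterchange) (simp_all add: acomp_idl acomp_idr)
    also have "\<dots> = acomp C (atens C (aid C ?cc') (bb_arr c)) (atens C P (aid C I))"
      using wP by (subst slide_left_first) simp_all
    also have "\<dots> = acomp C (atens C (aid C ?cc') (bb_arr c)) P" using wP by (simp add: atens_unitr)
    finally show ?thesis .
  qed
  have e3: "acomp C (atens C (aid C (V c)) (atens C (dd_arr (st c)) (aid C (V (st c))))) (atens C (aid C ?cc') (bb_arr c))
      = aid C ?cc'"
  proof -
    have "atens C (aid C ?cc') (bb_arr c) = atens C (aid C (V c)) (atens C (aid C (V (st c))) (bb_arr c))"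
      by (simp add: atens_assoc atens_id[symmetric])
    moreover have "acomp C (atens C (aid C (V c)) (atens C (dd_arr (st c)) (aid C (V (st c)))))
        (atens C (aid C (V c)) (atens C (aid C (V (st c))) (bb_arr c)))
      = atens C (aid C (V c)) (acomp C (atens C (dd_arr (st c)) (aid C (V (st c)))) (atens C (aid C (V (st c))) (bb_arr c)))"
      by (subst atens_acomp_right) simp_all
    moreover have "acomp C (atens C (dd_arr (st c)) (aid C (V (st c)))) (atens C (aid C (V (st c))) (bb_arr c)) = aid C (V (st c))"
      using zigzag_arr(2)[of "st c"] by simp
    ultimately show ?thesis by (simp add: atens_id)
  qed
  have "acomp C (atens C (cup_close_left c P) (aid C (V (st c)))) (bb_arr c)
      = acomp C (atens C (aid C (V c)) (atens C (dd_arr (st c)) (aid C (V (st c))))) (acomp C (atens C P (aid C ?cc')) (bb_arr c))"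
    unfolding e1 using wP by (subst acomp_assoc) simp_all
  also have "\<dots> = acomp C (acomp C (atens C (aid C (V c)) (atens C (dd_arr (st c)) (aid C (V (st c)))))
      (atens C (aid C ?cc') (bb_arr c))) P"
    unfolding e2 using wP by (subst acomp_assoc) simp_all
  also have "\<dots> = P" unfolding e3 using wP by (simp add: acomp_idl)
  finally show ?thesis .
qed

lemma cap_from_left_closure:
  assumes wP: "arr C P" and fP [simp]: "fst P = tno C (V c) (V (st c))" "fst (snd P) = I"
  shows "acomp C (dd_arr c) (atens C (cap_close_left c P) (aid C (V (st c)))) = P"
proof -
  let ?cc' = "tno C (V c) (V (st c))"
  have e1: "atens C (cap_close_left c P) (aid C (V (st c)))
      = acomp C (atens C P (aid C ?cc')) (atens C (aid C (V c)) (atens C (bb_arr (st c)) (aid C (V (st c)))))"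
    unfolding cap_close_left_def using wP by (subst atens_acomp_left) (simp_all add: atens_assoc atens_id)
  have e2: "acomp C (dd_arr c) (atens C P (aid C ?cc')) = acomp C P (atens C (aid C ?cc') (dd_arr c))"
  proof -
    have "acomp C (dd_arr c) (atens C P (aid C ?cc')) = acomp C (atens C (aid C I) (dd_arr c)) (atens C P (aid C ?cc'))"
      by (simp add: atens_unitl)
    also have "\<dots> = atens C P (dd_arr c)" using wP by (subst ainterchange) (simp_all add: acomp_idl acomp_idr)
    also have "\<dots> = acomp C (atens C P (aid C I)) (atens C (aid C ?cc') (dd_arr c))"
      using wP by (subst slide_right_first) simp_all
    also have "\<dots> = acomp C P (atens C (aid C ?cc') (dd_arr c))" using wP by (simp add: atens_unitr)
    finally show ?thesis .
  qed
  have e3: "acomp C (atens C (aid C ?cc') (dd_arr c)) (atens C (aid C (V c)) (atens C (bb_arr (st c)) (aid C (V (st c)))))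
      = aid C ?cc'"
  proof -
    have "atens C (aid C ?cc') (dd_arr c) = atens C (aid C (V c)) (atens C (aid C (V (st c))) (dd_arr c))"
      by (simp add: atens_assoc atens_id[symmetric])
    moreover have "acomp C (atens C (aid C (V c)) (atens C (aid C (V (st c))) (dd_arr c)))
        (atens C (aid C (V c)) (atens C (bb_arr (st c)) (aid C (V (st c)))))
      = atens C (aid C (V c)) (acomp C (atens C (aid C (V (st c))) (dd_arr c)) (atens C (bb_arr (st c)) (aid C (V (st c)))))"
      by (subst atens_acomp_right) simp_all
    moreover have "acomp C (atens C (aid C (V (st c))) (dd_arr c)) (atens C (bb_arr (st c)) (aid C (V (st c)))) = aid C (V (st c))"
      using zigzag_arr(1)[of "st c"] by simp
    ultimately show ?thesis by (simp add: atens_id)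
  qed
  have "acomp C (dd_arr c) (atens C (cap_close_left c P) (aid C (V (st c))))
      = acomp C (acomp C (dd_arr c) (atens C P (aid C ?cc'))) (atens C (aid C (V c)) (atens C (bb_arr (st c)) (aid C (V (st c)))))"
    unfolding e1 using wP by (subst acomp_assoc) simp_all
  also have "\<dots> = acomp C P (acomp C (atens C (aid C ?cc') (dd_arr c))
      (atens C (aid C (V c)) (atens C (bb_arr (st c)) (aid C (V (st c))))))"
    unfolding e2 using wP by (subst acomp_assoc) simp_all
  also have "\<dots> = P" unfolding e3 using wP by (simp add: acomp_idr)
  finally show ?thesis .
qed

text \<open>Hence a cup is the multiple of b_c by the scalar of its left closure, and its right
  closure is the same multiple of the identity: both closures have the same scalar.\<close>

lemma cup_closures_scalar:
  assumes p: "p \<in> hom C I (tno C (V c) (V (st c)))"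
  defines "P \<equiv> (I, tno C (V c) (V (st c)), p)"
  shows "scal C (V c) (snd (snd (cup_close_left c P))) = scal C (V (st c)) (snd (snd (cup_close_right c P)))"
proof -
  have wP: "arr C P" and fP: "fst P = I" "fst (snd P) = tno C (V c) (V (st c))" "snd (snd P) = p"
    using p by (simp_all add: P_def)
  define f where "f = snd (snd (cup_close_left c P))"
  have f: "f \<in> hom C (V c) (V c)"
  proof -
    have "arr C (cup_close_left c P)" "fst (cup_close_left c P) = V c" "fst (snd (cup_close_left c P)) = V c"
      using wP fP by (simp_all add: cup_close_left_def)
    then show ?thesis unfolding f_def arr_def by simp
  qed
  define \<kappa> where "\<kappa> = scal C (V c) f"
  have \<kappa>: "\<kappa> \<in> ground C" "tnm C \<kappa> (idm C (V c)) = f" using scal_endo[OF simple f] unfolding \<kappa>_def by simp_all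
  have pk: "p = tnm C \<kappa> (bb c)"
  proof -
    have "p = cmp C (tnm C f (idm C (V (st c)))) (bb c)"
      using arg_cong[OF cup_from_left_closure[OF wP fP(1,2)], of "\<lambda>x. snd (snd x)"] fP(3) unfolding f_def by simp
    also have "\<dots> = cmp C (tnm C \<kappa> (idm C (tno C (V c) (V (st c))))) (bb c)"
      using \<kappa> tnm_scl[OF \<kappa>(1) idm_hom[of "V c"] idm_hom[of "V (st c)"]] by simp
    also have "\<dots> = tnm C \<kappa> (bb c)"
      using cmp_scalar_left[OF \<kappa>(1) bb_hom[of c] idm_hom] cmp_idl[OF bb_hom[of c]] by simp
    finally show ?thesis .
  qed
  have "snd (snd (cup_close_right c P))
      = cmp C (tnm C (dd (st c)) (idm C (V (st c)))) (tnm C (idm C (V (st c))) (tnm C \<kappa> (bb c)))"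
    using pk fP by (simp add: cup_close_right_def)
  also have "\<dots> = cmp C (tnm C (dd (st c)) (idm C (V (st c)))) (tnm C \<kappa> (tnm C (idm C (V (st c))) (bb c)))"
    using tnm_scr[OF \<kappa>(1) idm_hom bb_hom] by simp
  also have "\<dots> = tnm C \<kappa> (cmp C (tnm C (dd (st c)) (idm C (V (st c)))) (tnm C (idm C (V (st c))) (bb c)))"
    using cmp_scalar_right[OF \<kappa>(1) tnm_hom[OF idm_hom[of "V (st c)"] bb_hom[of c], simplified]
        tnm_hom[OF dd_hom[of "st c"] idm_hom[of "V (st c)"], simplified]]
    by simp
  also have "\<dots> = tnm C \<kappa> (idm C (V (st c)))" using zigzag(2)[of "st c"] by simp
  finally show ?thesis using \<kappa>(1) unfolding f_def[symmetric] \<kappa>_def[symmetric] by simp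
qed

lemma cap_closures_scalar:
  assumes p: "p \<in> hom C (tno C (V c) (V (st c))) I"
  defines "P \<equiv> (tno C (V c) (V (st c)), I, p)"
  shows "scal C (V c) (snd (snd (cap_close_left c P))) = scal C (V (st c)) (snd (snd (cap_close_right c P)))"
proof -
  have wP: "arr C P" and fP: "fst P = tno C (V c) (V (st c))" "fst (snd P) = I" "snd (snd P) = p"
    using p by (simp_all add: P_def)
  define f where "f = snd (snd (cap_close_left c P))"
  have f: "f \<in> hom C (V c) (V c)"
  proof -
    have "arr C (cap_close_left c P)" "fst (cap_close_left c P) = V c" "fst (snd (cap_close_left c P)) = V c"
      using wP fP by (simp_all add: cap_close_left_def)
    then show ?thesis unfolding f_def arr_def by simp
  qed
  define \<kappa> where "\<kappa> = scal C (V c) f"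
  have \<kappa>: "\<kappa> \<in> ground C" "tnm C \<kappa> (idm C (V c)) = f" using scal_endo[OF simple f] unfolding \<kappa>_def by simp_all
  have pk: "p = tnm C \<kappa> (dd c)"
  proof -
    have "p = cmp C (dd c) (tnm C f (idm C (V (st c))))"
      using arg_cong[OF cap_from_left_closure[OF wP fP(1,2)], of "\<lambda>x. snd (snd x)"] fP(3) unfolding f_def by simp
    also have "\<dots> = cmp C (dd c) (tnm C \<kappa> (idm C (tno C (V c) (V (st c)))))"
      using \<kappa> tnm_scl[OF \<kappa>(1) idm_hom[of "V c"] idm_hom[of "V (st c)"]] by simp
    also have "\<dots> = tnm C \<kappa> (dd c)"
      using cmp_scalar_right[OF \<kappa>(1) idm_hom dd_hom[of c]] cmp_idr[OF dd_hom[of c]] by simp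
    finally show ?thesis .
  qed
  have "snd (snd (cap_close_right c P))
      = cmp C (tnm C (idm C (V (st c))) (tnm C \<kappa> (dd c))) (tnm C (bb (st c)) (idm C (V (st c))))"
    using pk fP by (simp add: cap_close_right_def)
  also have "\<dots> = cmp C (tnm C \<kappa> (tnm C (idm C (V (st c))) (dd c))) (tnm C (bb (st c)) (idm C (V (st c))))"
    using tnm_scr[OF \<kappa>(1) idm_hom dd_hom] by simp
  also have "\<dots> = tnm C \<kappa> (cmp C (tnm C (idm C (V (st c))) (dd c)) (tnm C (bb (st c)) (idm C (V (st c)))))"
    using cmp_scalar_left[OF \<kappa>(1) tnm_hom[OF bb_hom[of "st c"] idm_hom[of "V (st c)"], simplified]
        tnm_hom[OF idm_hom[of "V (st c)"] dd_hom[of c], simplified]]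
    by simp
  also have "\<dots> = tnm C \<kappa> (idm C (V (st c)))" using zigzag(1)[of "st c"] by simp
  finally show ?thesis using \<kappa>(1) unfolding f_def[symmetric] \<kappa>_def[symmetric] by simp
qed


section \<open>The identity \<langle>ABA z, x\<rangle> = \<langle>z, BAB x\<rangle> componentwise\<close>

definition cup_pair :: "'i \<Rightarrow> 'i \<Rightarrow> 'o \<times> 'o \<times> 'm \<Rightarrow> 'o \<times> 'o \<times> 'm \<Rightarrow> 'o \<times> 'o \<times> 'm" where
  "cup_pair a b X Z = acomp C (atens C X Z)
     (acomp C (atens C (aid C (V a)) (atens C (bb_arr b) (aid C (V (st a))))) (bb_arr a))"
definition cap_pair :: "'i \<Rightarrow> 'i \<Rightarrow> 'o \<times> 'o \<times> 'm \<Rightarrow> 'o \<times> 'o \<times> 'm \<Rightarrow> 'o \<times> 'o \<times> 'm" where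
  "cap_pair a b Y W = acomp C (acomp C (dd_arr a) (atens C (aid C (V a)) (atens C (dd_arr b) (aid C (V (st a))))))
     (atens C Y W)"

text \<open>The hat component of ABA paired with x, and the hat component of BAB paired with z, are
  the left and the right closure of the same cup.\<close>

lemma hh_left_closure:
  assumes x: "x \<in> hom C (tno C (V a) (V b)) (V c)" and z: "z \<in> hom C (tno C (V (st b)) (V (st a))) (V (st c))"
  shows "acomp C (tno C (V a) (V b), V c, x) (Ah_arr (st a) c (Bc_arr b (st c) (Ah_arr (st b) (st a) (tno C (V (st b)) (V (st a)), V (st c), z))))
    = cup_close_left c (cup_pair a b (tno C (V a) (V b), V c, x) (tno C (V (st b)) (V (st a)), V (st c), z))"
proof -
  let ?a = "V a" and ?b = "V b" and ?c = "V c" and ?a' = "V (st a)" and ?b' = "V (st b)" and ?c' = "V (st c)"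
  let ?X = "(tno C ?a ?b, ?c, x)" and ?Z = "(tno C ?b' ?a', ?c', z)"
  have wX: "arr C ?X" and wZ: "arr C ?Z" using x z by simp_all
  let ?K = "atens C (aid C ?a) (atens C (bb_arr b) (aid C ?a'))"
  let ?Psi = "acomp C (atens C ?X ?Z) (acomp C ?K (bb_arr a))"
  let ?P = "acomp C (atens C (aid C ?b) ?Z) (atens C (bb_arr b) (aid C ?a'))"
  let ?A1 = "atens C (aid C ?a) (atens C (aid C ?b) (dd_arr (st c)))"
  let ?A2 = "atens C (aid C ?a) (atens C ?P (aid C ?c))"
  let ?A3 = "atens C (bb_arr a) (aid C ?c)"
  have wP: "arr C ?P" using wZ by simp
  have unfold_rotations: "acomp C ?X (Ah_arr (st a) c (Bc_arr b (st c) (Ah_arr (st b) (st a) ?Z)))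
     = acomp C ?X (acomp C (atens C (aid C ?a) (acomp C (atens C (aid C ?b) (dd_arr (st c))) (atens C ?P (aid C ?c)))) ?A3)"
    unfolding Ah_arr_def Bc_arr_def by simp
  have split_whisker: "atens C (aid C ?a) (acomp C (atens C (aid C ?b) (dd_arr (st c))) (atens C ?P (aid C ?c))) = acomp C ?A1 ?A2"
    using wP by (subst atens_acomp_right) simp_all
  have reassoc: "acomp C ?X (acomp C (acomp C ?A1 ?A2) ?A3) = acomp C (acomp C (acomp C ?X ?A1) ?A2) ?A3"
    using wX wP by (simp add: acomp_assoc)
  have slide_past_cap: "acomp C ?X ?A1 = acomp C (atens C (aid C ?c) (dd_arr (st c))) (atens C ?X (aid C (tno C ?c' ?c)))"
  proof -
    have "?A1 = atens C (aid C (tno C ?a ?b)) (dd_arr (st c))" by (simp add: atens_assoc[symmetric] atens_id)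
    moreover have "acomp C ?X (atens C (aid C (tno C ?a ?b)) (dd_arr (st c))) = acomp C (atens C ?X (aid C I)) (atens C (aid C (tno C ?a ?b)) (dd_arr (st c)))"
      using wX by (simp add: atens_unitr)
    moreover have "\<dots> = atens C ?X (dd_arr (st c))" using wX by (subst ainterchange) (simp_all add: acomp_idl acomp_idr)
    moreover have "\<dots> = acomp C (atens C (aid C ?c) (dd_arr (st c))) (atens C ?X (aid C (tno C ?c' ?c)))"
      using wX by (subst slide_left_first) simp_all
    ultimately show ?thesis by simp
  qed
  let ?D = "atens C (aid C ?c) (dd_arr (st c))" and ?M = "atens C ?X (aid C (tno C ?c' ?c))"
  have reassoc': "acomp C (acomp C (acomp C ?D ?M) ?A2) ?A3 = acomp C ?D (acomp C ?M (acomp C ?A2 ?A3))"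
    using wX wP by (simp add: acomp_assoc)
  let ?split_whisker = "acomp C (atens C (aid C ?a) ?P) (bb_arr a)"
  have merge_cup: "acomp C ?A2 ?A3 = atens C ?split_whisker (aid C ?c)"
  proof -
    have "?A2 = atens C (atens C (aid C ?a) ?P) (aid C ?c)" using wP by (simp add: atens_assoc)
    moreover have "acomp C (atens C (atens C (aid C ?a) ?P) (aid C ?c)) ?A3 = atens C ?split_whisker (aid C ?c)"
      using wP by (subst ainterchange) (simp_all add: acomp_idl)
    ultimately show ?thesis by simp
  qed
  let ?Psi1 = "acomp C (atens C ?X (aid C ?c')) ?split_whisker"
  have merge_whisker: "acomp C ?M (atens C ?split_whisker (aid C ?c)) = atens C ?Psi1 (aid C ?c)"
  proof -
    have "?M = atens C (atens C ?X (aid C ?c')) (aid C ?c)" using wX by (simp add: atens_assoc atens_id)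
    moreover have "acomp C (atens C (atens C ?X (aid C ?c')) (aid C ?c)) (atens C ?split_whisker (aid C ?c)) = atens C ?Psi1 (aid C ?c)"
      using wX wP by (subst ainterchange) (simp_all add: acomp_idl)
    ultimately show ?thesis by simp
  qed
  have glued_cup: "?Psi1 = ?Psi"
  proof -
    have "atens C (aid C ?a) ?P = acomp C (atens C (aid C ?a) (atens C (aid C ?b) ?Z)) ?K"
      using wZ by (subst atens_acomp_right) simp_all
    also have "atens C (aid C ?a) (atens C (aid C ?b) ?Z) = atens C (aid C (tno C ?a ?b)) ?Z"
      using wZ by (simp add: atens_assoc[symmetric] atens_id)
    finally have e: "atens C (aid C ?a) ?P = acomp C (atens C (aid C (tno C ?a ?b)) ?Z) ?K" .
    have "?Psi1 = acomp C (atens C ?X (aid C ?c')) (acomp C (acomp C (atens C (aid C (tno C ?a ?b)) ?Z) ?K) (bb_arr a))"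
      unfolding e ..
    also have "\<dots> = acomp C (acomp C (atens C ?X (aid C ?c')) (atens C (aid C (tno C ?a ?b)) ?Z)) (acomp C ?K (bb_arr a))"
      using wX wZ by (simp add: acomp_assoc)
    also have "acomp C (atens C ?X (aid C ?c')) (atens C (aid C (tno C ?a ?b)) ?Z) = atens C ?X ?Z"
      using wX wZ by (subst ainterchange) (simp_all add: acomp_idl acomp_idr)
    finally show ?thesis .
  qed
  have normal_form: "acomp C ?X (Ah_arr (st a) c (Bc_arr b (st c) (Ah_arr (st b) (st a) ?Z))) = acomp C ?D (atens C ?Psi (aid C ?c))"
    unfolding unfold_rotations split_whisker reassoc slide_past_cap reassoc' merge_cup merge_whisker glued_cup ..
  show ?thesis unfolding cup_close_left_def cup_pair_def by (rule normal_form)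
qed

lemma hh_right_closure:
  assumes x: "x \<in> hom C (tno C (V a) (V b)) (V c)" and z: "z \<in> hom C (tno C (V (st b)) (V (st a))) (V (st c))"
  shows "acomp C (tno C (V (st b)) (V (st a)), V (st c), z) (Bh_arr (st c) a (Ac_arr c (st b) (Bh_arr a b (tno C (V a) (V b), V c, x))))
    = cup_close_right c (cup_pair a b (tno C (V a) (V b), V c, x) (tno C (V (st b)) (V (st a)), V (st c), z))"
proof -
  let ?a = "V a" and ?b = "V b" and ?c = "V c" and ?a' = "V (st a)" and ?b' = "V (st b)" and ?c' = "V (st c)"
  let ?X = "(tno C ?a ?b, ?c, x)" and ?Z = "(tno C ?b' ?a', ?c', z)"
  have wX: "arr C ?X" and wZ: "arr C ?Z" using x z by simp_all
  let ?K = "atens C (aid C ?a) (atens C (bb_arr b) (aid C ?a'))"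
  let ?Psi = "acomp C (atens C ?X ?Z) (acomp C ?K (bb_arr a))"
  let ?g = "acomp C (atens C ?X (aid C ?b')) (atens C (aid C ?a) (bb_arr b))"
  let ?E1 = "atens C (atens C (dd_arr (st c)) (aid C ?b')) (aid C ?a')"
  let ?E2 = "atens C (atens C (aid C ?c') ?g) (aid C ?a')"
  let ?E3 = "atens C (aid C ?c') (bb_arr a)"
  have wg: "arr C ?g" using wX by simp
  have unfold_rotations: "acomp C ?Z (Bh_arr (st c) a (Ac_arr c (st b) (Bh_arr a b ?X)))
     = acomp C ?Z (acomp C (atens C (acomp C (atens C (dd_arr (st c)) (aid C ?b')) (atens C (aid C ?c') ?g)) (aid C ?a')) ?E3)"
    unfolding Ac_arr_def Bh_arr_def by simp
  have split_whisker: "atens C (acomp C (atens C (dd_arr (st c)) (aid C ?b')) (atens C (aid C ?c') ?g)) (aid C ?a') = acomp C ?E1 ?E2"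
    using wg by (subst atens_acomp_left) simp_all
  have reassoc: "acomp C ?Z (acomp C (acomp C ?E1 ?E2) ?E3) = acomp C (acomp C (acomp C ?Z ?E1) ?E2) ?E3"
    using wZ wg by (simp add: acomp_assoc)
  have slide_past_cap: "acomp C ?Z ?E1 = acomp C (atens C (dd_arr (st c)) (aid C ?c')) (atens C (aid C (tno C ?c' ?c)) ?Z)"
  proof -
    have "?E1 = atens C (dd_arr (st c)) (aid C (tno C ?b' ?a'))" by (simp add: atens_assoc atens_id)
    moreover have "acomp C ?Z (atens C (dd_arr (st c)) (aid C (tno C ?b' ?a'))) = acomp C (atens C (aid C I) ?Z) (atens C (dd_arr (st c)) (aid C (tno C ?b' ?a')))"
      using wZ by (simp add: atens_unitl)
    moreover have "\<dots> = atens C (dd_arr (st c)) ?Z" using wZ by (subst ainterchange) (simp_all add: acomp_idl acomp_idr)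
    moreover have "\<dots> = acomp C (atens C (dd_arr (st c)) (aid C ?c')) (atens C (aid C (tno C ?c' ?c)) ?Z)"
      using wZ by (subst slide_right_first) simp_all
    ultimately show ?thesis by simp
  qed
  let ?D' = "atens C (dd_arr (st c)) (aid C ?c')" and ?M' = "atens C (aid C (tno C ?c' ?c)) ?Z"
  have reassoc': "acomp C (acomp C (acomp C ?D' ?M') ?E2) ?E3 = acomp C ?D' (acomp C ?M' (acomp C ?E2 ?E3))"
    using wZ wg by (simp add: acomp_assoc)
  let ?S2 = "acomp C (atens C ?g (aid C ?a')) (bb_arr a)"
  have merge_cup: "acomp C ?E2 ?E3 = atens C (aid C ?c') ?S2"
  proof -
    have "?E2 = atens C (aid C ?c') (atens C ?g (aid C ?a'))" using wg by (simp add: atens_assoc)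
    moreover have "acomp C (atens C (aid C ?c') (atens C ?g (aid C ?a'))) ?E3 = atens C (aid C ?c') ?S2"
      using wg by (subst atens_acomp_right) simp_all
    ultimately show ?thesis by simp
  qed
  let ?Psi2 = "acomp C (atens C (aid C ?c) ?Z) ?S2"
  have merge_whisker: "acomp C ?M' (atens C (aid C ?c') ?S2) = atens C (aid C ?c') ?Psi2"
  proof -
    have "?M' = atens C (aid C ?c') (atens C (aid C ?c) ?Z)" using wZ by (simp add: atens_assoc[symmetric] atens_id)
    moreover have "acomp C (atens C (aid C ?c') (atens C (aid C ?c) ?Z)) (atens C (aid C ?c') ?S2) = atens C (aid C ?c') ?Psi2"
      using wZ wg by (subst atens_acomp_right) simp_all
    ultimately show ?thesis by simp
  qed
  have glued_cup: "?Psi2 = ?Psi"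
  proof -
    have "atens C ?g (aid C ?a') = acomp C (atens C (atens C ?X (aid C ?b')) (aid C ?a')) (atens C (atens C (aid C ?a) (bb_arr b)) (aid C ?a'))"
      using wX by (subst atens_acomp_left) simp_all
    also have "\<dots> = acomp C (atens C ?X (aid C (tno C ?b' ?a'))) ?K"
      using wX by (simp add: atens_assoc atens_id)
    finally have e: "atens C ?g (aid C ?a') = acomp C (atens C ?X (aid C (tno C ?b' ?a'))) ?K" .
    have "?Psi2 = acomp C (atens C (aid C ?c) ?Z) (acomp C (acomp C (atens C ?X (aid C (tno C ?b' ?a'))) ?K) (bb_arr a))"
      unfolding e ..
    also have "\<dots> = acomp C (acomp C (atens C (aid C ?c) ?Z) (atens C ?X (aid C (tno C ?b' ?a')))) (acomp C ?K (bb_arr a))"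
      using wX wZ by (simp add: acomp_assoc)
    also have "acomp C (atens C (aid C ?c) ?Z) (atens C ?X (aid C (tno C ?b' ?a'))) = atens C ?X ?Z"
      using wX wZ by (subst ainterchange) (simp_all add: acomp_idl acomp_idr)
    finally show ?thesis .
  qed
  have normal_form: "acomp C ?Z (Bh_arr (st c) a (Ac_arr c (st b) (Bh_arr a b ?X))) = acomp C ?D' (atens C (aid C ?c') ?Psi)"
    unfolding unfold_rotations split_whisker reassoc slide_past_cap reassoc' merge_cup merge_whisker glued_cup ..
  show ?thesis unfolding cup_close_right_def cup_pair_def by (rule normal_form)
qed

lemma cc_left_closure:
  assumes y: "y \<in> hom C (V c) (tno C (V a) (V b))" and w: "w \<in> hom C (V (st c)) (tno C (V (st b)) (V (st a)))"
  shows "acomp C (Ac_arr (st a) c (Bh_arr b (st c) (Ac_arr (st b) (st a) (V (st c), tno C (V (st b)) (V (st a)), w)))) (V c, tno C (V a) (V b), y)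
    = cap_close_left c (cap_pair a b (V c, tno C (V a) (V b), y) (V (st c), tno C (V (st b)) (V (st a)), w))"
proof -
  let ?a = "V a" and ?b = "V b" and ?c = "V c" and ?a' = "V (st a)" and ?b' = "V (st b)" and ?c' = "V (st c)"
  let ?Y = "(?c, tno C ?a ?b, y)" and ?W = "(?c', tno C ?b' ?a', w)"
  have wY: "arr C ?Y" and wW: "arr C ?W" using y w by simp_all
  let ?K = "atens C (aid C ?a) (atens C (dd_arr b) (aid C ?a'))"
  let ?Om = "acomp C (acomp C (dd_arr a) ?K) (atens C ?Y ?W)"
  let ?h = "acomp C (atens C (dd_arr b) (aid C ?a')) (atens C (aid C ?b) ?W)"
  let ?A1 = "atens C (dd_arr a) (aid C ?c)"
  let ?B1 = "atens C (aid C ?a) (atens C ?h (aid C ?c))"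
  let ?B2 = "atens C (aid C ?a) (atens C (aid C ?b) (bb_arr (st c)))"
  have wh: "arr C ?h" using wW by simp
  have unfold_rotations: "acomp C (Ac_arr (st a) c (Bh_arr b (st c) (Ac_arr (st b) (st a) ?W))) ?Y
     = acomp C (acomp C ?A1 (atens C (aid C ?a) (acomp C (atens C ?h (aid C ?c)) (atens C (aid C ?b) (bb_arr (st c)))))) ?Y"
    unfolding Ac_arr_def Bh_arr_def by simp
  have split_whisker: "atens C (aid C ?a) (acomp C (atens C ?h (aid C ?c)) (atens C (aid C ?b) (bb_arr (st c)))) = acomp C ?B1 ?B2"
    using wh by (subst atens_acomp_right) simp_all
  have reassoc: "acomp C (acomp C ?A1 (acomp C ?B1 ?B2)) ?Y = acomp C (acomp C ?A1 ?B1) (acomp C ?B2 ?Y)"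
    using wY wh by (simp add: acomp_assoc)
  let ?O0 = "acomp C (dd_arr a) (atens C (aid C ?a) ?h)"
  have merge_cap: "acomp C ?A1 ?B1 = atens C ?O0 (aid C ?c)"
  proof -
    have "?B1 = atens C (atens C (aid C ?a) ?h) (aid C ?c)" using wh by (simp add: atens_assoc)
    moreover have "acomp C ?A1 (atens C (atens C (aid C ?a) ?h) (aid C ?c)) = atens C ?O0 (aid C ?c)"
      using wh by (subst ainterchange) (simp_all add: acomp_idl)
    ultimately show ?thesis by simp
  qed
  have slide_past_cup: "acomp C ?B2 ?Y = acomp C (atens C ?Y (aid C (tno C ?c' ?c))) (atens C (aid C ?c) (bb_arr (st c)))"
  proof -
    have "?B2 = atens C (aid C (tno C ?a ?b)) (bb_arr (st c))" by (simp add: atens_assoc[symmetric] atens_id)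
    moreover have "acomp C (atens C (aid C (tno C ?a ?b)) (bb_arr (st c))) ?Y = acomp C (atens C (aid C (tno C ?a ?b)) (bb_arr (st c))) (atens C ?Y (aid C I))"
      using wY by (simp add: atens_unitr)
    moreover have "\<dots> = atens C ?Y (bb_arr (st c))" using wY by (subst ainterchange) (simp_all add: acomp_idl acomp_idr)
    moreover have "\<dots> = acomp C (atens C ?Y (aid C (tno C ?c' ?c))) (atens C (aid C ?c) (bb_arr (st c)))"
      using wY by (subst slide_right_first) simp_all
    ultimately show ?thesis by simp
  qed
  let ?M = "atens C ?Y (aid C (tno C ?c' ?c))" and ?K2 = "atens C (aid C ?c) (bb_arr (st c))"
  have reassoc': "acomp C (atens C ?O0 (aid C ?c)) (acomp C ?M ?K2) = acomp C (acomp C (atens C ?O0 (aid C ?c)) ?M) ?K2"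
    using wY wh by (simp add: acomp_assoc)
  let ?O1 = "acomp C ?O0 (atens C ?Y (aid C ?c'))"
  have merge_whisker: "acomp C (atens C ?O0 (aid C ?c)) ?M = atens C ?O1 (aid C ?c)"
  proof -
    have "?M = atens C (atens C ?Y (aid C ?c')) (aid C ?c)" using wY by (simp add: atens_assoc atens_id)
    moreover have "acomp C (atens C ?O0 (aid C ?c)) (atens C (atens C ?Y (aid C ?c')) (aid C ?c)) = atens C ?O1 (aid C ?c)"
      using wY wh by (subst ainterchange) (simp_all add: acomp_idl)
    ultimately show ?thesis by simp
  qed
  have glued_cap: "?O1 = ?Om"
  proof -
    have "atens C (aid C ?a) ?h = acomp C ?K (atens C (aid C ?a) (atens C (aid C ?b) ?W))"
      using wW by (subst atens_acomp_right) simp_all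
    also have "atens C (aid C ?a) (atens C (aid C ?b) ?W) = atens C (aid C (tno C ?a ?b)) ?W"
      using wW by (simp add: atens_assoc[symmetric] atens_id)
    finally have e: "atens C (aid C ?a) ?h = acomp C ?K (atens C (aid C (tno C ?a ?b)) ?W)" .
    have "?O1 = acomp C (acomp C (dd_arr a) (acomp C ?K (atens C (aid C (tno C ?a ?b)) ?W))) (atens C ?Y (aid C ?c'))"
      unfolding e ..
    also have "\<dots> = acomp C (acomp C (dd_arr a) ?K) (acomp C (atens C (aid C (tno C ?a ?b)) ?W) (atens C ?Y (aid C ?c')))"
      using wY wW by (simp add: acomp_assoc)
    also have "acomp C (atens C (aid C (tno C ?a ?b)) ?W) (atens C ?Y (aid C ?c')) = atens C ?Y ?W"
      using wY wW by (subst ainterchange) (simp_all add: acomp_idl acomp_idr)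
    finally show ?thesis .
  qed
  have normal_form: "acomp C (Ac_arr (st a) c (Bh_arr b (st c) (Ac_arr (st b) (st a) ?W))) ?Y = acomp C (atens C ?Om (aid C ?c)) ?K2"
    unfolding unfold_rotations split_whisker reassoc merge_cap slide_past_cup reassoc' merge_whisker glued_cap ..
  show ?thesis unfolding cap_close_left_def cap_pair_def by (rule normal_form)
qed

lemma cc_right_closure:
  assumes y: "y \<in> hom C (V c) (tno C (V a) (V b))" and w: "w \<in> hom C (V (st c)) (tno C (V (st b)) (V (st a)))"
  shows "acomp C (Bc_arr (st c) a (Ah_arr c (st b) (Bc_arr a b (V c, tno C (V a) (V b), y)))) (V (st c), tno C (V (st b)) (V (st a)), w)
    = cap_close_right c (cap_pair a b (V c, tno C (V a) (V b), y) (V (st c), tno C (V (st b)) (V (st a)), w))"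
proof -
  let ?a = "V a" and ?b = "V b" and ?c = "V c" and ?a' = "V (st a)" and ?b' = "V (st b)" and ?c' = "V (st c)"
  let ?Y = "(?c, tno C ?a ?b, y)" and ?W = "(?c', tno C ?b' ?a', w)"
  have wY: "arr C ?Y" and wW: "arr C ?W" using y w by simp_all
  let ?K = "atens C (aid C ?a) (atens C (dd_arr b) (aid C ?a'))"
  let ?Om = "acomp C (acomp C (dd_arr a) ?K) (atens C ?Y ?W)"
  let ?h' = "acomp C (atens C (aid C ?a) (dd_arr b)) (atens C ?Y (aid C ?b'))"
  let ?A1' = "atens C (aid C ?c') (dd_arr a)"
  let ?B1' = "atens C (atens C (aid C ?c') ?h') (aid C ?a')"
  let ?B2' = "atens C (atens C (bb_arr (st c)) (aid C ?b')) (aid C ?a')"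
  have wh': "arr C ?h'" using wY by simp
  have unfold_rotations: "acomp C (Bc_arr (st c) a (Ah_arr c (st b) (Bc_arr a b ?Y))) ?W
     = acomp C (acomp C ?A1' (atens C (acomp C (atens C (aid C ?c') ?h') (atens C (bb_arr (st c)) (aid C ?b'))) (aid C ?a'))) ?W"
    unfolding Ah_arr_def Bc_arr_def by simp
  have split_whisker: "atens C (acomp C (atens C (aid C ?c') ?h') (atens C (bb_arr (st c)) (aid C ?b'))) (aid C ?a') = acomp C ?B1' ?B2'"
    using wh' by (subst atens_acomp_left) simp_all
  have reassoc: "acomp C (acomp C ?A1' (acomp C ?B1' ?B2')) ?W = acomp C (acomp C ?A1' ?B1') (acomp C ?B2' ?W)"
    using wW wh' by (simp add: acomp_assoc)
  let ?O0' = "acomp C (dd_arr a) (atens C ?h' (aid C ?a'))"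
  have merge_cap: "acomp C ?A1' ?B1' = atens C (aid C ?c') ?O0'"
  proof -
    have "?B1' = atens C (aid C ?c') (atens C ?h' (aid C ?a'))" using wh' by (simp add: atens_assoc)
    moreover have "acomp C ?A1' (atens C (aid C ?c') (atens C ?h' (aid C ?a'))) = atens C (aid C ?c') ?O0'"
      using wh' by (subst atens_acomp_right) simp_all
    ultimately show ?thesis by simp
  qed
  have slide_past_cup: "acomp C ?B2' ?W = acomp C (atens C (aid C (tno C ?c' ?c)) ?W) (atens C (bb_arr (st c)) (aid C ?c'))"
  proof -
    have "?B2' = atens C (bb_arr (st c)) (aid C (tno C ?b' ?a'))" by (simp add: atens_assoc atens_id)
    moreover have "acomp C (atens C (bb_arr (st c)) (aid C (tno C ?b' ?a'))) ?W = acomp C (atens C (bb_arr (st c)) (aid C (tno C ?b' ?a'))) (atens C (aid C I) ?W)"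
      using wW by (simp add: atens_unitl)
    moreover have "\<dots> = atens C (bb_arr (st c)) ?W" using wW by (subst ainterchange) (simp_all add: acomp_idl acomp_idr)
    moreover have "\<dots> = acomp C (atens C (aid C (tno C ?c' ?c)) ?W) (atens C (bb_arr (st c)) (aid C ?c'))"
      using wW by (subst slide_left_first) simp_all
    ultimately show ?thesis by simp
  qed
  let ?M' = "atens C (aid C (tno C ?c' ?c)) ?W" and ?K2' = "atens C (bb_arr (st c)) (aid C ?c')"
  have reassoc': "acomp C (atens C (aid C ?c') ?O0') (acomp C ?M' ?K2') = acomp C (acomp C (atens C (aid C ?c') ?O0') ?M') ?K2'"
    using wW wh' by (simp add: acomp_assoc)
  let ?O2 = "acomp C ?O0' (atens C (aid C ?c) ?W)"
  have merge_whisker: "acomp C (atens C (aid C ?c') ?O0') ?M' = atens C (aid C ?c') ?O2"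
  proof -
    have "?M' = atens C (aid C ?c') (atens C (aid C ?c) ?W)" using wW by (simp add: atens_assoc[symmetric] atens_id)
    moreover have "acomp C (atens C (aid C ?c') ?O0') (atens C (aid C ?c') (atens C (aid C ?c) ?W)) = atens C (aid C ?c') ?O2"
      using wW wh' by (subst atens_acomp_right) simp_all
    ultimately show ?thesis by simp
  qed
  have glued_cap: "?O2 = ?Om"
  proof -
    have "atens C ?h' (aid C ?a') = acomp C (atens C (atens C (aid C ?a) (dd_arr b)) (aid C ?a')) (atens C (atens C ?Y (aid C ?b')) (aid C ?a'))"
      using wY by (subst atens_acomp_left) simp_all
    also have "\<dots> = acomp C ?K (atens C ?Y (aid C (tno C ?b' ?a')))"
      using wY by (simp add: atens_assoc atens_id)
    finally have e: "atens C ?h' (aid C ?a') = acomp C ?K (atens C ?Y (aid C (tno C ?b' ?a')))" .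
    have "?O2 = acomp C (acomp C (dd_arr a) (acomp C ?K (atens C ?Y (aid C (tno C ?b' ?a'))))) (atens C (aid C ?c) ?W)"
      unfolding e ..
    also have "\<dots> = acomp C (acomp C (dd_arr a) ?K) (acomp C (atens C ?Y (aid C (tno C ?b' ?a'))) (atens C (aid C ?c) ?W))"
      using wY wW by (simp add: acomp_assoc)
    also have "acomp C (atens C ?Y (aid C (tno C ?b' ?a'))) (atens C (aid C ?c) ?W) = atens C ?Y ?W"
      using wY wW by (subst ainterchange) (simp_all add: acomp_idl acomp_idr)
    finally show ?thesis .
  qed
  have normal_form: "acomp C (Bc_arr (st c) a (Ah_arr c (st b) (Bc_arr a b ?Y))) ?W = acomp C (atens C (aid C ?c') ?Om) ?K2'"
    unfolding unfold_rotations split_whisker reassoc merge_cap slide_past_cup reassoc' merge_whisker glued_cap ..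
  show ?thesis unfolding cap_close_right_def cap_pair_def by (rule normal_form)
qed

lemma hat_pairing_ABA_BAB:
  assumes x: "x \<in> hom C (tno C (V a) (V b)) (V c)" and z: "z \<in> hom C (tno C (V (st b)) (V (st a))) (V (st c))"
  shows "scal C (V c) (cmp C x (Ah (st a) c (Bc b (st c) (Ah (st b) (st a) z))))
       = scal C (V (st c)) (cmp C z (Bh (st c) a (Ac c (st b) (Bh a b x))))"
proof -
  define P where "P = cup_pair a b (tno C (V a) (V b), V c, x) (tno C (V (st b)) (V (st a)), V (st c), z)"
  have "arr C P" "fst P = I" "fst (snd P) = tno C (V c) (V (st c))"
    using x z by (simp_all add: P_def cup_pair_def)
  then have P: "P = (I, tno C (V c) (V (st c)), snd (snd P))" and p: "snd (snd P) \<in> hom C I (tno C (V c) (V (st c)))"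
    by (auto simp: arr_def intro: triple_eqI)
  show ?thesis
    using cup_closures_scalar[OF p] arg_cong[OF hh_left_closure[OF x z], of "\<lambda>t. snd (snd t)"]
      arg_cong[OF hh_right_closure[OF x z], of "\<lambda>t. snd (snd t)"]
    by (simp flip: P P_def)
qed

lemma check_pairing_ABA_BAB:
  assumes y: "y \<in> hom C (V c) (tno C (V a) (V b))" and w: "w \<in> hom C (V (st c)) (tno C (V (st b)) (V (st a)))"
  shows "scal C (V c) (cmp C (Ac (st a) c (Bh b (st c) (Ac (st b) (st a) w))) y)
       = scal C (V (st c)) (cmp C (Bc (st c) a (Ah c (st b) (Bc a b y))) w)"
proof -
  define P where "P = cap_pair a b (V c, tno C (V a) (V b), y) (V (st c), tno C (V (st b)) (V (st a)), w)"
  have "arr C P" "fst P = tno C (V c) (V (st c))" "fst (snd P) = I"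
    using y w by (simp_all add: P_def cap_pair_def)
  then have P: "P = (tno C (V c) (V (st c)), I, snd (snd P))" and p: "snd (snd P) \<in> hom C (tno C (V c) (V (st c))) I"
    by (auto simp: arr_def intro: triple_eqI)
  show ?thesis
    using cap_closures_scalar[OF p] arg_cong[OF cc_left_closure[OF y w], of "\<lambda>t. snd (snd t)"]
      arg_cong[OF cc_right_closure[OF y w], of "\<lambda>t. snd (snd t)"]
    by (simp flip: P P_def)
qed


section \<open>ABA is adjoint to BAB\<close>

definition rho :: "'i \<times> 'i \<times> 'i \<Rightarrow> 'i \<times> 'i \<times> 'i" where
  "rho t = tA (tB (tA t))"

lemma rho_simp [simp]: "rho (a, b, c) = (st b, st a, st c)" by (simp add: rho_def)
lemma rho_rho [simp]: "rho (rho t) = t" by (cases t) simp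
lemma rho_alt: "tB (tA (tB t)) = rho t" by (cases t) simp

abbreviation opA' :: "('i, 'm) hsp \<Rightarrow> ('i, 'm) hsp" where "opA' \<equiv> opA C V st bb dd"
abbreviation opB' :: "('i, 'm) hsp \<Rightarrow> ('i, 'm) hsp" where "opB' \<equiv> opB C V st bb dd"

lemma ABA_components:
  assumes z: "z \<in> Hspace C V"
  shows "fst (opA' (opB' (opA' z))) u = AC (tA u) (BH (tB (tA u)) (AC (rho u) (snd z (rho u))))"
    "snd (opA' (opB' (opA' z))) u = AH (tA u) (BC (tB (tA u)) (AH (rho u) (fst z (rho u))))"
  using opA_components[OF opB_Hspace[OF opA_Hspace[OF z]]] opB_components[OF opA_Hspace[OF z]]
    opA_components[OF z]
  by (simp_all add: rho_def)

lemma BAB_components: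
  assumes x: "x \<in> Hspace C V"
  shows "fst (opB' (opA' (opB' x))) u = BC (tB u) (AH (tA (tB u)) (BC (rho u) (snd x (rho u))))"
    "snd (opB' (opA' (opB' x))) u = BH (tB u) (AC (tA (tB u)) (BH (rho u) (fst x (rho u))))"
  using opB_components[OF opA_Hspace[OF opB_Hspace[OF x]]] opA_components[OF opB_Hspace[OF x]]
    opB_components[OF x]
  by (simp_all add: rho_alt)

lemma supp_ABA:
  assumes z: "z \<in> Hspace C V"
  shows "supp (opA' (opB' (opA' z))) \<subseteq> rho ` supp z"
proof
  fix u assume "u \<in> supp (opA' (opB' (opA' z)))"
  then have "rho u \<in> supp z" by (auto simp: supp_def ABA_components[OF z] components_zero)
  then show "u \<in> rho ` supp z" by (metis rho_rho image_eqI)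
qed
lemma supp_BAB:
  assumes x: "x \<in> Hspace C V"
  shows "supp (opB' (opA' (opB' x))) \<subseteq> rho ` supp x"
proof
  fix u assume "u \<in> supp (opB' (opA' (opB' x)))"
  then have "rho u \<in> supp x" by (auto simp: supp_def BAB_components[OF x] components_zero)
  then show "u \<in> rho ` supp x" by (metis rho_rho image_eqI)
qed

lemma pair_at_ABA_BAB:
  assumes z: "z \<in> Hspace C V" and x: "x \<in> Hspace C V"
  shows "pair_at (opA' (opB' (opA' z))) x u = pair_at z (opB' (opA' (opB' x))) (rho u)"
proof -
  obtain a b c where u: "u = (a, b, c)" by (cases u)
  have fx: "fst x u \<in> hom C (tno C (V a) (V b)) (V c)" and sx: "snd x u \<in> hom C (V c) (tno C (V a) (V b))"
    using HspaceD(1)[OF x, of u] HspaceD(2)[OF x, of u] u by simp_all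
  have fz: "fst z (rho u) \<in> hom C (tno C (V (st b)) (V (st a))) (V (st c))"
    and sz: "snd z (rho u) \<in> hom C (V (st c)) (tno C (V (st b)) (V (st a)))"
    using HspaceD(1)[OF z, of "rho u"] HspaceD(2)[OF z, of "rho u"] u by simp_all
  show ?thesis
    unfolding pair_at_def ABA_components[OF z] BAB_components[OF x]
    using hat_pairing_ABA_BAB[OF fx fz] check_pairing_ABA_BAB[OF sx sz] u by (simp add: add.commute)
qed

lemma ABA_BAB_adjoint:
  assumes z: "z \<in> Hspace C V" and x: "x \<in> Hspace C V"
  shows "pform C V (opA' (opB' (opA' z))) x = pform C V z (opB' (opA' (opB' x)))"
proof -
  define S where "S = supp x \<union> rho ` supp x \<union> supp z \<union> rho ` supp z"
  have fS: "finite S" unfolding S_def using HspaceD(3)[OF x] HspaceD(3)[OF z] by simp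
  have "rho ` rho ` A = A" for A by (simp add: image_image)
  then have rS: "rho ` S = S" unfolding S_def image_Un by (simp add: ac_simps)
  have inj: "inj_on rho S" by (rule inj_on_inverseI[where g = rho]) (rule rho_rho)
  have "pform C V (opA' (opB' (opA' z))) x = (\<Sum>u\<in>S. pair_at (opA' (opB' (opA' z))) x u)"
    by (rule pform_sum[OF opA_Hspace[OF opB_Hspace[OF opA_Hspace[OF z]]] x fS])
      (use supp_ABA[OF z] in \<open>auto simp: S_def\<close>)
  also have "\<dots> = (\<Sum>u\<in>S. pair_at z (opB' (opA' (opB' x))) (rho u))"
    using pair_at_ABA_BAB[OF z x] by simp
  also have "\<dots> = (\<Sum>u\<in>rho ` S. pair_at z (opB' (opA' (opB' x))) u)"
    by (simp only: sum.reindex[OF inj] comp_def)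
  also have "\<dots> = pform C V z (opB' (opA' (opB' x)))"
    unfolding rS
    by (rule pform_sum[symmetric, OF z opB_Hspace[OF opA_Hspace[OF opB_Hspace[OF x]]] fS])
      (use supp_BAB[OF x] in \<open>auto simp: S_def\<close>)
  finally show ?thesis .
qed

text \<open>Given transposes A' and B', the operator A'B'A' is a transpose of ABA; by the adjointness
  above and nondegeneracy it equals BAB.\<close>

lemma transposes_ABA:
  assumes tA: "is_transpose C V opA' A'" and tB: "is_transpose C V opB' B'"
    and x: "x \<in> Hspace C V"
  shows "A' (B' (A' x)) = opB' (opA' (opB' x))"
proof -
  have HA: "\<And>y. y \<in> Hspace C V \<Longrightarrow> A' y \<in> Hspace C V" and HB: "\<And>y. y \<in> Hspace C V \<Longrightarrow> B' y \<in> Hspace C V"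
    using tA tB unfolding is_transpose_def hlinear_def by blast+
  have adjA: "\<And>u v. u \<in> Hspace C V \<Longrightarrow> v \<in> Hspace C V \<Longrightarrow> pform C V (opA' u) v = pform C V u (A' v)"
    and adjB: "\<And>u v. u \<in> Hspace C V \<Longrightarrow> v \<in> Hspace C V \<Longrightarrow> pform C V (opB' u) v = pform C V u (B' v)"
    using tA tB unfolding is_transpose_def by blast+
  show ?thesis
  proof (rule pform_nondegenerate)
    show "A' (B' (A' x)) \<in> Hspace C V" using HA HB x by blast
    show "opB' (opA' (opB' x)) \<in> Hspace C V" using x by (simp add: opA_Hspace opB_Hspace)
    fix z assume z: "z \<in> Hspace C V"
    have "pform C V z (A' (B' (A' x))) = pform C V (opA' z) (B' (A' x))"
      using adjA[OF z] HA HB x by simp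
    also have "\<dots> = pform C V (opB' (opA' z)) (A' x)"
      using adjB[OF opA_Hspace[OF z]] HA x by simp
    also have "\<dots> = pform C V (opA' (opB' (opA' z))) x"
      using adjA[OF opB_Hspace[OF opA_Hspace[OF z]] x] by simp
    also have "\<dots> = pform C V z (opB' (opA' (opB' x)))" by (rule ABA_BAB_adjoint[OF z x])
    finally show "pform C V z (A' (B' (A' x))) = pform C V z (opB' (opA' (opB' x)))" .
  qed
qed

end


theorem lemma1p4:
  fixes C :: "('o, 'm::ab_group_add) mcat"
    and V :: "'i \<Rightarrow> 'o" and st :: "'i \<Rightarrow> 'i" and bb dd :: "'i \<Rightarrow> 'm"
  assumes "smab_cat C"
    and "psi_system C V st bb dd"
  shows "(\<exists>A'. is_transpose C V (opA C V st bb dd) A')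
       \<and> (\<exists>B'. is_transpose C V (opB C V st bb dd) B')
       \<and> (\<forall>A' B'. is_transpose C V (opA C V st bb dd) A' \<longrightarrow> is_transpose C V (opB C V st bb dd) B' \<longrightarrow>
            (\<forall>x\<in>Hspace C V. A' (B' (A' x)) = opB C V st bb dd (opA C V st bb dd (opB C V st bb dd x))))"
proof -
  interpret psi C V st bb dd using psi_if_psi_system[OF assms] .
  show ?thesis using A_transpose B_transpose transposes_ABA by blast
qed

end
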